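(* Let $X$ be a pointed manifold and let $(F,\nu_F)$, $(G,\nu_G)$ be topological spaces with strictly associative right topological module structures over $\Omega X$. Let $\{\varphi_{n+1}:I^n\times F\times(\Omega X)^n\to G\}_{n\ge0}$ be an $\mathcal{A}_\infty$-morphism of topological modules. Then the maps $\phi_{n+1}:C_*(F)\otimes C_*(\Omega X)^{\otimes n}\to C_*(G)$ of degree $n$ defined by $\phi_{n+1}(\alpha\otimes\gamma_1\otimes\cdots\otimes\gamma_n)=\varphi_{n+1,*}(\mathrm{Id}_{I^n}\otimes\alpha\otimes\gamma_1\otimes\cdots\otimes\gamma_n)$ form a morphism of $\mathcal{A}_\infty$-modules $\boldsymbol\phi:(C_*(F),\partial,\nu_{F,*})\to(C_*(G),\partial,\nu_{G,*})$ over $C_*(\Omega X)$.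
   Context: $I=[0,1]$, $\Omega X$ Moore loops based at the basepoint with concatenation $\cdot$, $C_*$ normalized cubical chains, $\mathrm{Id}_{I^n}$ the identity cube as an $n$-chain, chain-level maps via the cubical cross product. $C_*(\Omega X)$ is an $\mathcal{A}_\infty$-algebra with $\mu_1$ the differential, $\mu_2$ Pontryagin product, $\mu_i=0$ for $i\ge3$; $C_*(F)$ is a DG (hence $\mathcal{A}_\infty$) module with $\nu_1=\partial$, $\nu_2=\nu_{F,*}$, $\nu_k=0$ for $k\ge3$, similarly for $G$. An $\mathcal{A}_\infty$-morphism of topological modules is a family $\varphi_{n+1}:I^n\times F\times(\Omega X)^n\to G$, $n\ge0$, such that $\varphi_{n+1}(t_1,\dots,t_n,\alpha,\gamma_1,\dots,\gamma_n)$ equals $\varphi_n(t_2,\dots,t_n,\nu_F(\alpha,\gamma_1),\gamma_2,\dots,\gamma_n)$ if $t_1=1$; equals $\varphi_n(t_1,\dots,\widehat{t_j},\dots,t_n,\alpha,\gamma_1,\dots,\gamma_{j-1}\cdot\gamma_j,\dots,\gamma_n)$ if $t_j=1$, $j\ge2$; equals $\nu_G(\varphi_j(t_1,\dots,t_{j-1},\alpha,\gamma_1,\dots,\gamma_{j-1}),\gamma_j\cdot\ldots\cdot\gamma_n)$ if $t_j=0$. A morphism of $\mathcal{A}_\infty$-modules $\boldsymbol\phi:(\mathcal{A},\nu^A)\to(\mathcal{B},\nu^B)$ is a family $\phi_n:\mathcal{A}\otimes C_*(\Omega X)^{\otimes n-1}\to\mathcal{B}$ of degree $n-1$ satisfying,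 for all $N\ge1$, $\sum_{s+t=N}(-1)^{st}\phi_{t+1}(\nu^A_s\otimes1^{\otimes t})+\sum_{r+s+t=N,r\ge1}(-1)^{r+st}\phi_{r+t+1}(1^{\otimes r}\otimes\mu_s\otimes1^{\otimes t})=\sum_{s+t=N}(-1)^{(s+1)t}\nu^B_{t+1}(\phi_s\otimes1^{\otimes t})$ (Koszul signs). *)

theory Defs
  imports "HOL-Homology.Homology" "HOL-Analysis.Abstract_Topological_Spaces"
begin

definition topological_manifold :: "'a topology \<Rightarrow> bool" where
  "topological_manifold X \<longleftrightarrow> Hausdorff_space X \<and> second_countable X \<and>
     (\<exists>n. \<forall>x\<in>topspace X. \<exists>U V. openin X U \<and> x \<in> U \<and> openin (Euclidean_space n) V \<and>
            subtopology X U homeomorphic_space subtopology (Euclidean_space n) V)"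

definition compact_open :: "'a topology \<Rightarrow> 'b topology \<Rightarrow> ('a \<Rightarrow> 'b) topology" where
  "compact_open S Y = topology_generated_by
      {{f. f ` K \<subseteq> U} | K U. compactin S K \<and> openin Y U}"

text \<open>A Moore loop is a pair (r, g) with r \<ge> 0 and g a path of length r; g is extended
  by the basepoint outside [0, r].\<close>
type_synonym 'a loop = "real \<times> (real \<Rightarrow> 'a)"

definition moore_loops :: "'a topology \<Rightarrow> 'a \<Rightarrow> 'a loop set" where
  "moore_loops X x0 = {(r, g). 0 \<le> r \<and> continuous_map euclideanreal X g \<and>
      (\<forall>t. t \<le> 0 \<longrightarrow> g t = x0) \<and> (\<forall>t. r \<le> t \<longrightarrow> g t = x0)}"

definition Omega_top :: "'a topology \<Rightarrow> 'a \<Rightarrow> 'a loop topology" where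
  "Omega_top X x0 = subtopology (prod_topology euclideanreal (compact_open euclideanreal X))
                                (moore_loops X x0)"

definition loop_concat :: "'a loop \<Rightarrow> 'a loop \<Rightarrow> 'a loop" where
  "loop_concat p q = (fst p + fst q, \<lambda>t. if t \<le> fst p then snd p t else snd q (t - fst p))"

definition const_loop :: "'a \<Rightarrow> 'a loop" where
  "const_loop x0 = (0, \<lambda>t. x0)"

text \<open>Iterated product g_1 \<cdot> ... \<cdot> g_k of a nonempty list (concatenation is strictly associative).\<close>
fun loop_prod :: "'a loop list \<Rightarrow> 'a loop" where
  "loop_prod [] = undefined"
| "loop_prod [g] = g"
| "loop_prod (g # gs) = loop_concat g (loop_prod gs)"

definition Omega_pow :: "'a topology \<Rightarrow> 'a \<Rightarrow> nat \<Rightarrow> (nat \<Rightarrow> 'a loop) topology" where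
  "Omega_pow X x0 n = product_topology (\<lambda>i. Omega_top X x0) {..<n}"

definition right_top_module :: "'a topology \<Rightarrow> 'a \<Rightarrow> 'f topology \<Rightarrow> ('f \<Rightarrow> 'a loop \<Rightarrow> 'f) \<Rightarrow> bool" where
  "right_top_module X x0 F nu \<longleftrightarrow>
     continuous_map (prod_topology F (Omega_top X x0)) F (\<lambda>(a, g). nu a g) \<and>
     (\<forall>a\<in>topspace F. \<forall>g\<in>moore_loops X x0. \<forall>h\<in>moore_loops X x0.
          nu (nu a g) h = nu a (loop_concat g h)) \<and>
     (\<forall>a\<in>topspace F. nu a (const_loop x0) = a)"

definition unit_cube :: "nat \<Rightarrow> (nat \<Rightarrow> real) set" where
  "unit_cube n = {x. (\<forall>i<n. 0 \<le> x i \<and> x i \<le> 1) \<and> (\<forall>i\<ge>n. x i = 0)}"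

definition cube_top :: "nat \<Rightarrow> (nat \<Rightarrow> real) topology" where
  "cube_top n = subtopology (powertop_real UNIV) (unit_cube n)"

text \<open>Coordinates t_1..t_n are stored at indices 0..n-1.\<close>
definition del_coord :: "nat \<Rightarrow> (nat \<Rightarrow> real) \<Rightarrow> (nat \<Rightarrow> real)" where
  "del_coord j t = (\<lambda>i. if i < j then t i else t (Suc i))"

definition trunc_coord :: "nat \<Rightarrow> (nat \<Rightarrow> real) \<Rightarrow> (nat \<Rightarrow> real)" where
  "trunc_coord j t = (\<lambda>i. if i < j then t i else 0)"

text \<open>phi n is \<phi>_{n+1} : I^n \<times> F \<times> (\<Omega>X)^n \<rightarrow> G.  Index k (0-based) corresponds to t_{k+1}, \<gamma>_{k+1}.\<close>
definition top_ainf_morphism ::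
  "'a topology \<Rightarrow> 'a \<Rightarrow> 'f topology \<Rightarrow> ('f \<Rightarrow> 'a loop \<Rightarrow> 'f) \<Rightarrow> 'g topology \<Rightarrow> ('g \<Rightarrow> 'a loop \<Rightarrow> 'g)
   \<Rightarrow> (nat \<Rightarrow> (nat \<Rightarrow> real) \<Rightarrow> 'f \<Rightarrow> (nat \<Rightarrow> 'a loop) \<Rightarrow> 'g) \<Rightarrow> bool" where
  "top_ainf_morphism X x0 F nuF G nuG phi \<longleftrightarrow>
    (\<forall>n. continuous_map (prod_topology (cube_top n) (prod_topology F (Omega_pow X x0 n))) G
            (\<lambda>(t, a, gs). phi n t a gs)) \<and>
    (\<forall>n\<ge>1. \<forall>t\<in>unit_cube n. \<forall>a\<in>topspace F. \<forall>gs\<in>topspace (Omega_pow X x0 n).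
       (t 0 = 1 \<longrightarrow> phi n t a gs =
           phi (n - 1) (del_coord 0 t) (nuF a (gs 0))
               (restrict (\<lambda>i. gs (Suc i)) {..<n - 1})) \<and>
       (\<forall>k. 1 \<le> k \<and> k < n \<and> t k = 1 \<longrightarrow> phi n t a gs =
           phi (n - 1) (del_coord k t) a
               (restrict (\<lambda>i. if i < k - 1 then gs i
                               else if i = k - 1 then loop_concat (gs (k - 1)) (gs k)
                               else gs (Suc i)) {..<n - 1})) \<and>
       (\<forall>k<n. t k = 0 \<longrightarrow> phi n t a gs =
           nuG (phi k (trunc_coord k t) a (restrict gs {..<k}))
               (loop_prod (map gs [k..<n]))))"

text \<open>A cube is a pair (n, \<sigma>) with \<sigma> : I^n \<rightarrow> Y, extensional on I^n.\<close>
type_synonym 'a cube = "nat \<times> ((nat \<Rightarrow> real) \<Rightarrow> 'a)"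

definition singular_cube :: "'a topology \<Rightarrow> 'a cube \<Rightarrow> bool" where
  "singular_cube Y c \<longleftrightarrow> continuous_map (cube_top (fst c)) Y (snd c) \<and>
                         snd c \<in> extensional (unit_cube (fst c))"

definition degenerate_cube :: "'a cube \<Rightarrow> bool" where
  "degenerate_cube c \<longleftrightarrow> (\<exists>j<fst c. \<forall>x\<in>unit_cube (fst c). snd c x = snd c (x(j := 0)))"

definition nondeg_cubes :: "'a topology \<Rightarrow> 'a cube set" where
  "nondeg_cubes Y = {c. singular_cube Y c \<and> \<not> degenerate_cube c}"

text \<open>Chains are finitely supported integer combinations of cubes; normalized chains are represented
  by chains supported on nondegenerate cubes, the projection killing degenerate cubes being nd.\<close>
definition nd :: "('a cube \<Rightarrow>\<^sub>0 int) \<Rightarrow> ('a cube \<Rightarrow>\<^sub>0 int)" where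
  "nd c = frag_extend (\<lambda>s. if degenerate_cube s then 0 else frag_of s) c"

definition coord_ins :: "nat \<Rightarrow> real \<Rightarrow> (nat \<Rightarrow> real) \<Rightarrow> (nat \<Rightarrow> real)" where
  "coord_ins j e x = (\<lambda>i. if i < j then x i else if i = j then e else x (i - 1))"

definition cube_face :: "nat \<Rightarrow> real \<Rightarrow> 'a cube \<Rightarrow> 'a cube" where
  "cube_face j e c = (fst c - 1, restrict (\<lambda>x. snd c (coord_ins j e x)) (unit_cube (fst c - 1)))"

definition cube_boundary :: "'a cube \<Rightarrow> ('a cube \<Rightarrow>\<^sub>0 int)" where
  "cube_boundary c = nd (\<Sum>j<fst c. frag_cmul ((-1) ^ (Suc j))
                           (frag_of (cube_face j 0 c) - frag_of (cube_face j 1 c)))"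

definition seg :: "nat \<Rightarrow> nat \<Rightarrow> (nat \<Rightarrow> real) \<Rightarrow> (nat \<Rightarrow> real)" where
  "seg k m x = (\<lambda>i. if i < m then x (k + i) else 0)"

definition cube_cross :: "'a cube \<Rightarrow> 'b cube \<Rightarrow> ('a \<times> 'b) cube" where
  "cube_cross c d = (fst c + fst d,
      restrict (\<lambda>x. (snd c (seg 0 (fst c) x), snd d (seg (fst c) (fst d) x))) (unit_cube (fst c + fst d)))"

definition cube_tuple :: "'a cube list \<Rightarrow> (nat \<Rightarrow> 'a) cube" where
  "cube_tuple cs = (sum_list (map fst cs),
      restrict (\<lambda>x. restrict (\<lambda>i. snd (cs ! i) (seg (sum_list (map fst (take i cs))) (fst (cs ! i)) x))
                             {..<length cs})
               (unit_cube (sum_list (map fst cs))))"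

definition id_cube :: "nat \<Rightarrow> (nat \<Rightarrow> real) cube" where
  "id_cube n = (n, restrict (\<lambda>x. x) (unit_cube n))"

definition cube_push :: "('a \<Rightarrow> 'b) \<Rightarrow> 'a cube \<Rightarrow> 'b cube" where
  "cube_push f c = (fst c, restrict (\<lambda>x. f (snd c x)) (unit_cube (fst c)))"

text \<open>All graded abelian groups are free on given bases BA, BB, BC with degree functions.
  Operations are given on basis tensors (a \<otimes> c_1 \<otimes> ... \<otimes> c_k) as (a, [c_1,...,c_k]) and extended
  linearly.  mu s acts on lists of length s, nuA s on (a, list of length s-1), phi n on
  (a, list of length n-1).  The Koszul sign of 1^{\<otimes>r} \<otimes> \<mu>_s \<otimes> 1^{\<otimes>t} (\<mu>_s of degree s-2) applied
  to a \<otimes> c_1 ... is (-1)^{s (|a| + |c_1| + ... + |c_{r-1}|)}; the other compositions carry no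
  Koszul sign since identities have degree 0.\<close>
definition ainf_module_morphism ::
  "('a \<Rightarrow> nat) \<Rightarrow> ('b \<Rightarrow> nat) \<Rightarrow> ('c \<Rightarrow> nat) \<Rightarrow> 'a set \<Rightarrow> 'c set
   \<Rightarrow> (nat \<Rightarrow> 'c list \<Rightarrow> ('c \<Rightarrow>\<^sub>0 int))
   \<Rightarrow> (nat \<Rightarrow> 'a \<times> 'c list \<Rightarrow> ('a \<Rightarrow>\<^sub>0 int))
   \<Rightarrow> (nat \<Rightarrow> 'b \<times> 'c list \<Rightarrow> ('b \<Rightarrow>\<^sub>0 int))
   \<Rightarrow> (nat \<Rightarrow> 'a \<times> 'c list \<Rightarrow> ('b \<Rightarrow>\<^sub>0 int)) \<Rightarrow> bool" where
  "ainf_module_morphism degA degB degC BA BC mu nuA nuB phi \<longleftrightarrow>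
    (\<forall>n\<ge>1. \<forall>a\<in>BA. \<forall>cs\<in>lists BC. length cs = n - 1 \<longrightarrow>
        (\<forall>b\<in>Poly_Mapping.keys (phi n (a, cs)). degB b = degA a + sum_list (map degC cs) + (n - 1))) \<and>
    (\<forall>N\<ge>1. \<forall>a\<in>BA. \<forall>cs\<in>lists BC. length cs = N - 1 \<longrightarrow>
       (\<Sum>s=1..N. frag_cmul ((-1) ^ (s * (N - s)))
            (frag_extend (\<lambda>a'. phi (N - s + 1) (a', drop (s - 1) cs)) (nuA s (a, take (s - 1) cs))))
     + (\<Sum>r=1..N. \<Sum>s=1..N - r. frag_cmul ((-1) ^ (r + s * (N - r - s))
                                  * (-1) ^ (s * (degA a + sum_list (map degC (take (r - 1) cs)))))
            (frag_extend (\<lambda>c. phi (r + (N - r - s) + 1) (a, take (r - 1) cs @ [c] @ drop (r - 1 + s) cs))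
                         (mu s (take s (drop (r - 1) cs)))))
     = (\<Sum>s=1..N. frag_cmul ((-1) ^ ((s + 1) * (N - s)))
            (frag_extend (\<lambda>b. nuB (N - s + 1) (b, drop (s - 1) cs)) (phi s (a, take (s - 1) cs)))))"

definition chain_mu :: "nat \<Rightarrow> 'a loop cube list \<Rightarrow> ('a loop cube \<Rightarrow>\<^sub>0 int)" where
  "chain_mu s cs =
     (if s = 1 then cube_boundary (cs ! 0)
      else if s = 2 then nd (frag_of (cube_push (\<lambda>(g, h). loop_concat g h) (cube_cross (cs ! 0) (cs ! 1))))
      else 0)"

definition chain_nu :: "('f \<Rightarrow> 'a loop \<Rightarrow> 'f) \<Rightarrow> nat \<Rightarrow> 'f cube \<times> 'a loop cube list \<Rightarrow> ('f cube \<Rightarrow>\<^sub>0 int)" where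
  "chain_nu nu s ac =
     (if s = 1 then cube_boundary (fst ac)
      else if s = 2 then nd (frag_of (cube_push (\<lambda>(a, g). nu a g) (cube_cross (fst ac) (snd ac ! 0))))
      else 0)"

definition chain_phi :: "(nat \<Rightarrow> (nat \<Rightarrow> real) \<Rightarrow> 'f \<Rightarrow> (nat \<Rightarrow> 'a loop) \<Rightarrow> 'g)
     \<Rightarrow> nat \<Rightarrow> 'f cube \<times> 'a loop cube list \<Rightarrow> ('g cube \<Rightarrow>\<^sub>0 int)" where
  "chain_phi phi m ac =
     nd (frag_of (cube_push (\<lambda>(t, a, gs). phi (m - 1) t a gs)
           (cube_cross (id_cube (m - 1)) (cube_cross (fst ac) (cube_tuple (snd ac))))))"

end

theory Submission
  imports Defs
begin

text \<open>The chain \<open>\<phi>\<^sub>n\<^sub>+\<^sub>1(\<alpha> \<otimes> \<gamma>\<^sub>1 \<otimes> \<dots> \<otimes> \<gamma>\<^sub>n)\<close> is a single cube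
  \<open>P = \<phi>\<^sub>n\<^sub>+\<^sub>1\<^sub>*(Id\<^bsub>I\<^sup>n\<^esub> \<times> \<alpha> \<times> \<gamma>\<^sub>1 \<times> \<dots> \<times> \<gamma>\<^sub>n)\<close>. By the Leibniz rule for the cubical cross
  product, \<open>\<partial>P\<close> consists of the faces of \<open>I\<^sup>n\<close>, the cubes over \<open>\<partial>\<alpha>\<close> and the cubes over the
  \<open>\<partial>\<gamma>\<^sub>r\<close>. The boundary conditions of an \<open>A\<^sub>\<infinity>\<close>-morphism identify the faces of \<open>I\<^sup>n\<close>:
  \<open>t\<^sub>1 = 1\<close> gives \<open>\<phi>\<^sub>n(\<nu>\<^sub>F(\<alpha>, \<gamma>\<^sub>1), \<gamma>\<^sub>2, \<dots>)\<close>, \<open>t\<^sub>j = 1\<close> for \<open>j \<ge> 2\<close> gives \<open>\<phi>\<^sub>n\<close> with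
  \<open>\<gamma>\<^sub>j\<^sub>-\<^sub>1 \<cdot> \<gamma>\<^sub>j\<close>, \<open>t\<^sub>n = 0\<close> gives \<open>\<nu>\<^sub>G(\<phi>\<^sub>n(\<alpha>, \<gamma>\<^sub>1, \<dots>, \<gamma>\<^sub>n\<^sub>-\<^sub>1), \<gamma>\<^sub>n)\<close>, and for
  \<open>j < n\<close> the face \<open>t\<^sub>j = 0\<close> does not depend on \<open>t\<^sub>j\<^sub>+\<^sub>1\<close>, so it is degenerate and vanishes in
  normalized chains. As \<open>\<mu>\<^sub>s\<close> and \<open>\<nu>\<^sub>s\<close> vanish for \<open>s \<ge> 3\<close>, these are exactly the terms of
  the \<open>A\<^sub>\<infinity>\<close>-relation, and the relation is a matter of signs.\<close>

lemma mem_unit_cube: "x \<in> unit_cube n \<longleftrightarrow> (\<forall>i<n. 0 \<le> x i \<and> x i \<le> 1) \<and> (\<forall>i\<ge>n. x i = 0)"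
  by (simp add: unit_cube_def)

lemma unit_cube_coord_bounds: "x \<in> unit_cube n \<Longrightarrow> 0 \<le> x i \<and> x i \<le> 1"
  unfolding mem_unit_cube by (cases "i < n") auto

lemma seg_in_unit_cube: "x \<in> unit_cube n \<Longrightarrow> seg k m x \<in> unit_cube m"
  using unit_cube_coord_bounds[of x n] unfolding mem_unit_cube[of _ m] seg_def by auto

lemma coord_ins_in_unit_cube:
  assumes "x \<in> unit_cube m" "j \<le> m" "0 \<le> e" "e \<le> 1"
  shows "coord_ins j e x \<in> unit_cube (Suc m)"
  unfolding mem_unit_cube[of _ "Suc m"]
proof (intro conjI allI impI)
  fix i
  show "0 \<le> coord_ins j e x i" "coord_ins j e x i \<le> 1"
    using assms unit_cube_coord_bounds[of x m] unfolding coord_ins_def by auto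
  show "coord_ins j e x i = 0" if "Suc m \<le> i"
    using assms that unfolding mem_unit_cube coord_ins_def by auto
qed

lemma fun_upd_zero_in_unit_cube: "x \<in> unit_cube n \<Longrightarrow> j < n \<Longrightarrow> x(j := 0) \<in> unit_cube n"
  unfolding mem_unit_cube by auto

lemma seg_seg: "k + m \<le> m' \<Longrightarrow> seg k m (seg k' m' x) = seg (k' + k) m x"
  unfolding seg_def by (rule ext) (auto simp: add.assoc)

lemma seg_coord_ins_before: "k + m \<le> j \<Longrightarrow> seg k m (coord_ins j e x) = seg k m x"
  unfolding seg_def coord_ins_def by auto

lemma seg_coord_ins_after: "j < k \<Longrightarrow> seg k m (coord_ins j e x) = seg (k - 1) m x"
  unfolding seg_def coord_ins_def by (rule ext) auto

lemma seg_coord_ins_inside: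
  "k \<le> j \<Longrightarrow> j < k + m \<Longrightarrow> seg k m (coord_ins j e x) = coord_ins (j - k) e (seg k (m - 1) x)"
  unfolding seg_def coord_ins_def by (rule ext) auto

lemma seg_fun_upd_outside: "j < k \<or> k + m \<le> j \<Longrightarrow> seg k m (x(j := v)) = seg k m x"
  unfolding seg_def by (rule ext) auto

lemma seg_fun_upd_inside: "k \<le> j \<Longrightarrow> j < k + m \<Longrightarrow> seg k m (x(j := v)) = (seg k m x)(j - k := v)"
  unfolding seg_def by (rule ext) auto

lemma coord_ins_zero_eq_fun_upd: "coord_ins j 0 x = (coord_ins j e x)(j := 0)"
  unfolding coord_ins_def by (rule ext) auto

lemma coord_ins_fun_upd:
  "i \<noteq> j \<Longrightarrow> coord_ins j e (x((if i < j then i else i - 1) := 0)) = (coord_ins j e x)(i := 0)"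
  unfolding coord_ins_def by (rule ext) auto

text \<open>The factor \<open>cs ! i\<close> of \<open>cube_tuple cs\<close> occupies the coordinates from \<open>offset cs i\<close> on.\<close>
abbreviation offset :: "'a cube list \<Rightarrow> nat \<Rightarrow> nat" where
  "offset cs i \<equiv> sum_list (map fst (take i cs))"

lemma offset_Suc: "i < length cs \<Longrightarrow> offset cs (Suc i) = offset cs i + fst (cs ! i)"
  by (simp add: take_Suc_conv_app_nth)

lemma offset_mono: "i \<le> j \<Longrightarrow> offset cs i \<le> offset cs j"
  using take_add[of i "j - i" cs] by simp

lemma offset_Suc_le: "i < j \<Longrightarrow> j \<le> length cs \<Longrightarrow> offset cs i + fst (cs ! i) \<le> offset cs j"
  using offset_Suc[of i cs] offset_mono[of "Suc i" j cs] by simp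

lemma offset_le_sum_list: "offset cs i \<le> sum_list (map fst cs)"
proof -
  have "sum_list (map fst cs) = offset cs i + sum_list (map fst (drop i cs))"
    by (metis append_take_drop_id map_append sum_list_append)
  then show ?thesis by simp
qed

lemma offset_Suc_le_sum_list: "i < length cs \<Longrightarrow> offset cs i + fst (cs ! i) \<le> sum_list (map fst cs)"
  using offset_Suc[of i cs] offset_le_sum_list[of "Suc i" cs] by simp

lemma sum_list_fst_list_update:
  fixes cs :: "'a cube list"
  shows "r < length cs \<Longrightarrow> sum_list (map fst (cs[r := c])) + fst (cs ! r) = sum_list (map fst cs) + fst c"
proof (induction cs arbitrary: r)
  case (Cons d cs)
  then show ?case by (cases r) auto
qed simp

lemma offset_list_update_le: "i \<le> r \<Longrightarrow> offset (cs[r := c]) i = offset cs i"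
  by (simp add: take_update_cancel)

lemma offset_list_update_gt:
  assumes "r < i" "r < length cs"
  shows "offset (cs[r := c]) i + fst (cs ! r) = offset cs i + fst c"
proof -
  have "take i (cs[r := c]) = (take i cs)[r := c]"
    by (simp add: take_update_swap)
  then show ?thesis
    using assms sum_list_fst_list_update[of r "take i cs" c] by simp
qed

lemma nd_of: "nd (frag_of s) = (if degenerate_cube s then 0 else frag_of s)"
  by (simp add: nd_def)

lemma nd_add: "nd (x + y) = nd x + nd y"
  by (simp add: nd_def frag_extend_add)

lemma nd_diff: "nd (x - y) = nd x - nd y"
  by (simp add: nd_def frag_extend_diff)

lemma nd_cmul: "nd (frag_cmul k x) = frag_cmul k (nd x)"
  by (simp add: nd_def frag_extend_cmul)

lemma nd_sum: "finite I \<Longrightarrow> nd (\<Sum>i\<in>I. g i) = (\<Sum>i\<in>I. nd (g i))"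
  by (simp add: nd_def frag_extend_sum o_def)

lemma frag_cmul_diff_distrib2: "frag_cmul k (x - y) = frag_cmul k x - frag_cmul k y"
  by (metis add_diff_cancel frag_cmul_distrib2 diff_add_cancel)

lemma frag_extend_frag_extend:
  "frag_extend f (frag_extend g x) = frag_extend (\<lambda>s. frag_extend f (g s)) x"
  using subset_UNIV by (induction x rule: frag_induction) (auto simp: frag_extend_diff)

lemma nd_frag_extend: "nd (frag_extend g x) = frag_extend (\<lambda>s. nd (g s)) x"
  unfolding nd_def by (rule frag_extend_frag_extend)

lemma frag_extend_nd:
  assumes "\<And>s. degenerate_cube s \<Longrightarrow> g s = 0"
  shows "frag_extend g (nd x) = frag_extend g x"
  unfolding nd_def frag_extend_frag_extend by (rule frag_extend_eq) (auto simp: assms)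

lemma frag_extend_nd_nd:
  assumes "\<And>s. degenerate_cube s \<Longrightarrow> degenerate_cube (f s)"
  shows "frag_extend (\<lambda>s. nd (frag_of (f s))) (nd x) = nd (frag_extend (\<lambda>s. frag_of (f s)) x)"
  by (subst frag_extend_nd) (auto simp: nd_of assms nd_frag_extend)

lemma frag_extend_nd_nd_of:
  assumes "\<And>s. degenerate_cube s \<Longrightarrow> degenerate_cube (f s)"
  shows "frag_extend (\<lambda>s. nd (frag_of (f s))) (nd (frag_of c)) = nd (frag_of (f c))"
  using frag_extend_nd_nd[OF assms, where x = "frag_of c"] by simp

lemma cube_eqI:
  assumes "fst c = fst d" "snd c \<in> extensional (unit_cube (fst c))"
    "snd d \<in> extensional (unit_cube (fst d))"
    "\<And>x. x \<in> unit_cube (fst c) \<Longrightarrow> snd c x = snd d x"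
  shows "c = d"
  using assms by (simp add: prod_eq_iff extensionalityI)

lemma fst_cube_face [simp]: "fst (cube_face j e c) = fst c - 1"
  by (simp add: cube_face_def)

lemma fst_cube_cross [simp]: "fst (cube_cross c d) = fst c + fst d"
  by (simp add: cube_cross_def)

lemma fst_cube_push [simp]: "fst (cube_push f c) = fst c"
  by (simp add: cube_push_def)

lemma fst_cube_tuple [simp]: "fst (cube_tuple cs) = sum_list (map fst cs)"
  by (simp add: cube_tuple_def)

lemma fst_id_cube [simp]: "fst (id_cube n) = n"
  by (simp add: id_cube_def)

lemma snd_cube_face_extensional [simp]:
  "n = fst c - 1 \<Longrightarrow> snd (cube_face j e c) \<in> extensional (unit_cube n)"
  by (simp add: cube_face_def)

lemma snd_cube_cross_extensional [simp]:
  "n = fst c + fst d \<Longrightarrow> snd (cube_cross c d) \<in> extensional (unit_cube n)"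
  by (simp add: cube_cross_def)

lemma snd_cube_push_extensional [simp]:
  "n = fst c \<Longrightarrow> snd (cube_push f c) \<in> extensional (unit_cube n)"
  by (simp add: cube_push_def)

lemma snd_cube_tuple_extensional [simp]:
  "n = sum_list (map fst cs) \<Longrightarrow> snd (cube_tuple cs) \<in> extensional (unit_cube n)"
  by (simp add: cube_tuple_def)

lemma snd_cube_face: "x \<in> unit_cube (fst c - 1) \<Longrightarrow> snd (cube_face j e c) x = snd c (coord_ins j e x)"
  by (simp add: cube_face_def)

lemma snd_cube_cross:
  "x \<in> unit_cube (fst c + fst d) \<Longrightarrow>
   snd (cube_cross c d) x = (snd c (seg 0 (fst c) x), snd d (seg (fst c) (fst d) x))"
  by (simp add: cube_cross_def)

lemma snd_cube_push: "x \<in> unit_cube (fst c) \<Longrightarrow> snd (cube_push f c) x = f (snd c x)"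
  by (simp add: cube_push_def)

lemma snd_cube_tuple:
  "x \<in> unit_cube (sum_list (map fst cs)) \<Longrightarrow>
   snd (cube_tuple cs) x = restrict (\<lambda>i. snd (cs ! i) (seg (offset cs i) (fst (cs ! i)) x)) {..<length cs}"
  by (simp add: cube_tuple_def)

lemma snd_cube_tuple_seg:
  assumes "x \<in> unit_cube n"
  shows "snd (cube_tuple cs) (seg k (sum_list (map fst cs)) x) =
         restrict (\<lambda>i. snd (cs ! i) (seg (k + offset cs i) (fst (cs ! i)) x)) {..<length cs}"
  using seg_in_unit_cube[OF assms, of k "sum_list (map fst cs)"]
  by (auto simp: snd_cube_tuple seg_seg offset_Suc_le_sum_list intro!: restrict_ext)

lemma snd_id_cube: "x \<in> unit_cube n \<Longrightarrow> snd (id_cube n) x = x"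
  by (simp add: id_cube_def)

lemma degenerate_cube_push: "degenerate_cube c \<Longrightarrow> degenerate_cube (cube_push f c)"
  unfolding degenerate_cube_def
proof (elim exE conjE)
  fix j assume j: "j < fst c" and h: "\<forall>x\<in>unit_cube (fst c). snd c x = snd c (x(j := 0))"
  show "\<exists>j<fst (cube_push f c). \<forall>x\<in>unit_cube (fst (cube_push f c)).
          snd (cube_push f c) x = snd (cube_push f c) (x(j := 0))"
  proof (intro exI conjI ballI)
    show "j < fst (cube_push f c)" using j by simp
    fix x assume x: "x \<in> unit_cube (fst (cube_push f c))"
    moreover have "x(j := 0) \<in> unit_cube (fst c)"
      using x j by (intro fun_upd_zero_in_unit_cube) auto
    ultimately show "snd (cube_push f c) x = snd (cube_push f c) (x(j := 0))"
      using h[rule_format, of x] by (simp add: snd_cube_push)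
  qed
qed

lemma degenerate_cube_cross_left: "degenerate_cube c \<Longrightarrow> degenerate_cube (cube_cross c d)"
  unfolding degenerate_cube_def
proof (elim exE conjE)
  fix j assume j: "j < fst c" and h: "\<forall>x\<in>unit_cube (fst c). snd c x = snd c (x(j := 0))"
  show "\<exists>j<fst (cube_cross c d). \<forall>x\<in>unit_cube (fst (cube_cross c d)).
          snd (cube_cross c d) x = snd (cube_cross c d) (x(j := 0))"
  proof (intro exI conjI ballI)
    show "j < fst (cube_cross c d)" using j by simp
    fix x assume x: "x \<in> unit_cube (fst (cube_cross c d))"
    then have x': "x(j := 0) \<in> unit_cube (fst c + fst d)"
      using j by (intro fun_upd_zero_in_unit_cube) auto
    have "seg 0 (fst c) (x(j := 0)) = (seg 0 (fst c) x)(j := 0)"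
      using j by (simp add: seg_fun_upd_inside)
    moreover have "seg (fst c) (fst d) (x(j := 0)) = seg (fst c) (fst d) x"
      using j by (simp add: seg_fun_upd_outside)
    moreover have "seg 0 (fst c) x \<in> unit_cube (fst c)"
      using x by (simp add: seg_in_unit_cube)
    ultimately show "snd (cube_cross c d) x = snd (cube_cross c d) (x(j := 0))"
      using x x' h[rule_format, of "seg 0 (fst c) x"] by (simp add: snd_cube_cross)
  qed
qed

lemma degenerate_cube_cross_right: "degenerate_cube d \<Longrightarrow> degenerate_cube (cube_cross c d)"
  unfolding degenerate_cube_def
proof (elim exE conjE)
  fix j assume j: "j < fst d" and h: "\<forall>x\<in>unit_cube (fst d). snd d x = snd d (x(j := 0))"
  show "\<exists>j<fst (cube_cross c d). \<forall>x\<in>unit_cube (fst (cube_cross c d)).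
          snd (cube_cross c d) x = snd (cube_cross c d) (x(j := 0))"
  proof (intro exI conjI ballI)
    show "fst c + j < fst (cube_cross c d)" using j by simp
    fix x assume x: "x \<in> unit_cube (fst (cube_cross c d))"
    then have x': "x(fst c + j := 0) \<in> unit_cube (fst c + fst d)"
      using j by (intro fun_upd_zero_in_unit_cube) auto
    have "seg 0 (fst c) (x(fst c + j := 0)) = seg 0 (fst c) x"
      by (simp add: seg_fun_upd_outside)
    moreover have "seg (fst c) (fst d) (x(fst c + j := 0)) = (seg (fst c) (fst d) x)(j := 0)"
      using j by (simp add: seg_fun_upd_inside)
    moreover have "seg (fst c) (fst d) x \<in> unit_cube (fst d)"
      using x by (simp add: seg_in_unit_cube)
    ultimately show "snd (cube_cross c d) x = snd (cube_cross c d) (x(fst c + j := 0))"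
      using x x' h[rule_format, of "seg (fst c) (fst d) x"] by (simp add: snd_cube_cross)
  qed
qed

lemma degenerate_cube_tuple:
  assumes r: "r < length cs" and degenerate: "degenerate_cube (cs ! r)"
  shows "degenerate_cube (cube_tuple cs)"
proof -
  obtain j where j: "j < fst (cs ! r)"
    and h: "\<forall>x\<in>unit_cube (fst (cs ! r)). snd (cs ! r) x = snd (cs ! r) (x(j := 0))"
    using degenerate unfolding degenerate_cube_def by blast
  let ?J = "offset cs r + j"
  have J: "?J < sum_list (map fst cs)"
    using offset_Suc_le_sum_list[OF r] j by linarith
  show ?thesis unfolding degenerate_cube_def
  proof (intro exI conjI ballI)
    show "?J < fst (cube_tuple cs)" using J by simp
    fix x assume "x \<in> unit_cube (fst (cube_tuple cs))"
    then have x: "x \<in> unit_cube (sum_list (map fst cs))" by simp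
    then have x': "x(?J := 0) \<in> unit_cube (sum_list (map fst cs))"
      using J by (intro fun_upd_zero_in_unit_cube)
    have factor: "snd (cs ! i) (seg (offset cs i) (fst (cs ! i)) x) =
                  snd (cs ! i) (seg (offset cs i) (fst (cs ! i)) (x(?J := 0)))"
      if i: "i < length cs" for i
    proof (cases "i = r")
      case True
      then show ?thesis
        using h[rule_format, OF seg_in_unit_cube[OF x]] by (simp add: seg_fun_upd_inside j)
    next
      case False
      then have "?J < offset cs i \<or> offset cs i + fst (cs ! i) \<le> ?J"
        using offset_Suc_le[of i r cs] offset_Suc_le[of r i cs] r i j by (cases "i < r") auto
      then show ?thesis by (simp add: seg_fun_upd_outside)
    qed
    show "snd (cube_tuple cs) x = snd (cube_tuple cs) (x(?J := 0))"
      using x x' factor by (auto simp: snd_cube_tuple intro!: restrict_ext)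
  qed
qed

lemma cube_face_push:
  assumes "j < fst c" "0 \<le> e" "e \<le> 1"
  shows "cube_face j e (cube_push f c) = cube_push f (cube_face j e c)"
proof (rule cube_eqI)
  fix x assume x: "x \<in> unit_cube (fst (cube_face j e (cube_push f c)))"
  then have "coord_ins j e x \<in> unit_cube (fst c)"
    using assms coord_ins_in_unit_cube[of x "fst c - 1" j e] by simp
  then show "snd (cube_face j e (cube_push f c)) x = snd (cube_push f (cube_face j e c)) x"
    using x by (simp add: snd_cube_face snd_cube_push)
qed auto

lemma cube_face_cross_left:
  assumes j: "j < fst c" and e: "0 \<le> e" "e \<le> 1"
  shows "cube_face j e (cube_cross c d) = cube_cross (cube_face j e c) d"
proof (rule cube_eqI)
  obtain m where m: "fst c = Suc m" using j by (cases "fst c") auto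
  fix x assume "x \<in> unit_cube (fst (cube_face j e (cube_cross c d)))"
  then have x: "x \<in> unit_cube (m + fst d)" using m by simp
  have "coord_ins j e x \<in> unit_cube (Suc m + fst d)"
    using j m e coord_ins_in_unit_cube[OF x, of j e] by simp
  moreover have "seg 0 (Suc m) (coord_ins j e x) = coord_ins j e (seg 0 m x)"
    using seg_coord_ins_inside[of 0 j "Suc m" e x] j m by simp
  moreover have "seg (Suc m) (fst d) (coord_ins j e x) = seg m (fst d) x"
    using seg_coord_ins_after[of j "Suc m" "fst d" e x] j m by simp
  ultimately show "snd (cube_face j e (cube_cross c d)) x = snd (cube_cross (cube_face j e c) d) x"
    using x m seg_in_unit_cube[OF x, of 0 m] by (simp add: snd_cube_face snd_cube_cross)
qed (use j in auto)

lemma cube_face_cross_right: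
  assumes j: "fst c \<le> j" "j < fst c + fst d" and e: "0 \<le> e" "e \<le> 1"
  shows "cube_face j e (cube_cross c d) = cube_cross c (cube_face (j - fst c) e d)"
proof (rule cube_eqI)
  obtain k where k: "fst d = Suc k" using j by (cases "fst d") auto
  fix x assume "x \<in> unit_cube (fst (cube_face j e (cube_cross c d)))"
  then have x: "x \<in> unit_cube (fst c + k)" using k by simp
  have "coord_ins j e x \<in> unit_cube (fst c + Suc k)"
    using j k e coord_ins_in_unit_cube[OF x, of j e] by simp
  moreover have "seg 0 (fst c) (coord_ins j e x) = seg 0 (fst c) x"
    using seg_coord_ins_before[of 0 "fst c" j e x] j by simp
  moreover have "seg (fst c) (Suc k) (coord_ins j e x) = coord_ins (j - fst c) e (seg (fst c) k x)"
    using seg_coord_ins_inside[of "fst c" j "Suc k" e x] j k by simp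
  ultimately show "snd (cube_face j e (cube_cross c d)) x = snd (cube_cross c (cube_face (j - fst c) e d)) x"
    using x k seg_in_unit_cube[OF x, of "fst c" k] by (simp add: snd_cube_face snd_cube_cross)
qed (use j in auto)

lemma cube_face_tuple:
  assumes r: "r < length cs" and j: "j < fst (cs ! r)" and e: "0 \<le> e" "e \<le> 1"
  shows "cube_face (offset cs r + j) e (cube_tuple cs) = cube_tuple (cs[r := cube_face j e (cs ! r)])"
proof -
  let ?cs' = "cs[r := cube_face j e (cs ! r)]"
  let ?J = "offset cs r + j"
  have dim: "sum_list (map fst ?cs') + 1 = sum_list (map fst cs)"
    using sum_list_fst_list_update[OF r, of "cube_face j e (cs ! r)"] j by simp
  show ?thesis
  proof (rule cube_eqI)
    show "fst (cube_face ?J e (cube_tuple cs)) = fst (cube_tuple ?cs')"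
      using dim by simp
    fix x assume "x \<in> unit_cube (fst (cube_face ?J e (cube_tuple cs)))"
    moreover have "sum_list (map fst cs) - 1 = sum_list (map fst ?cs')"
      using dim by linarith
    ultimately have x: "x \<in> unit_cube (sum_list (map fst ?cs'))"
      by (simp only: fst_cube_face fst_cube_tuple)
    have ins: "coord_ins ?J e x \<in> unit_cube (sum_list (map fst cs))"
      using coord_ins_in_unit_cube[OF x, of ?J e] e dim j offset_Suc_le_sum_list[OF r] by simp
    have factor: "snd (cs ! i) (seg (offset cs i) (fst (cs ! i)) (coord_ins ?J e x)) =
                  snd (?cs' ! i) (seg (offset ?cs' i) (fst (?cs' ! i)) x)" if i: "i < length cs" for i
    proof -
      consider "i < r" | "i = r" | "r < i" by linarith
      then show ?thesis
      proof cases
        case 1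
        then have "offset cs i + fst (cs ! i) \<le> ?J"
          using offset_Suc_le[of i r cs] r by simp
        then show ?thesis using 1 by (simp add: seg_coord_ins_before offset_list_update_le)
      next
        case 2
        have "seg (offset cs r) (fst (cs ! r)) (coord_ins ?J e x) =
              coord_ins j e (seg (offset cs r) (fst (cs ! r) - 1) x)"
          using seg_coord_ins_inside[of "offset cs r" ?J "fst (cs ! r)" e x] j by simp
        then show ?thesis
          using 2 r seg_in_unit_cube[OF x] by (simp add: offset_list_update_le snd_cube_face)
      next
        case 3
        have "offset ?cs' i = offset cs i - 1"
          using offset_list_update_gt[OF 3 r, of "cube_face j e (cs ! r)"] j by simp
        moreover have "?J < offset cs i"
          using offset_Suc_le[of r i cs] 3 i j by simp
        ultimately show ?thesis using 3 by (simp add: seg_coord_ins_after)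
      qed
    qed
    show "snd (cube_face ?J e (cube_tuple cs)) x = snd (cube_tuple ?cs') x"
      using x ins factor
      by (simp add: snd_cube_face snd_cube_tuple dim[symmetric] cong: restrict_cong)
  qed simp_all
qed

section \<open>The Leibniz rule\<close>

definition raw_boundary :: "'a cube \<Rightarrow> ('a cube \<Rightarrow>\<^sub>0 int)" where
  "raw_boundary c = (\<Sum>j<fst c. frag_cmul ((-1) ^ Suc j)
                        (frag_of (cube_face j 0 c) - frag_of (cube_face j 1 c)))"

lemma cube_boundary_eq_nd_raw_boundary: "cube_boundary c = nd (raw_boundary c)"
  by (simp add: cube_boundary_def raw_boundary_def)

lemma frag_extend_raw_boundary:
  "frag_extend g (raw_boundary c) =
   (\<Sum>j<fst c. frag_cmul ((-1) ^ Suc j) (g (cube_face j 0 c) - g (cube_face j 1 c)))"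
  by (simp add: raw_boundary_def frag_extend_sum frag_extend_cmul frag_extend_diff o_def)

lemma sum_lessThan_add: "(\<Sum>j<m + k. f j) = (\<Sum>j<m. f j) + (\<Sum>j<k. f (m + j))"
  for f :: "nat \<Rightarrow> 'b::comm_monoid_add"
  by (induction k) (auto simp: add.assoc)

lemma sum_lessThan_sum_list:
  "(\<Sum>j<sum_list qs. f j) = (\<Sum>r<length qs. \<Sum>j<qs ! r. f (sum_list (take r qs) + j))"
  for f :: "nat \<Rightarrow> 'b::comm_monoid_add"
proof (induction qs rule: rev_induct)
  case (snoc q qs)
  have "(\<Sum>j<sum_list (qs @ [q]). f j) = (\<Sum>j<sum_list qs. f j) + (\<Sum>j<q. f (sum_list qs + j))"
    by (simp add: sum_lessThan_add)
  also have "(\<Sum>j<sum_list qs. f j) =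
             (\<Sum>r<length qs. \<Sum>j<(qs @ [q]) ! r. f (sum_list (take r (qs @ [q])) + j))"
    using snoc by (auto simp: nth_append intro!: sum.cong)
  finally show ?case by simp
qed simp

lemma raw_boundary_push:
  "raw_boundary (cube_push f c) = frag_extend (\<lambda>c'. frag_of (cube_push f c')) (raw_boundary c)"
  unfolding frag_extend_raw_boundary by (simp add: raw_boundary_def cube_face_push)

lemma raw_boundary_cross:
  "raw_boundary (cube_cross c d) =
     frag_extend (\<lambda>c'. frag_of (cube_cross c' d)) (raw_boundary c)
   + frag_cmul ((-1) ^ fst c) (frag_extend (\<lambda>d'. frag_of (cube_cross c d')) (raw_boundary d))"
  unfolding frag_extend_raw_boundary
  by (simp add: raw_boundary_def sum_lessThan_add cube_face_cross_left cube_face_cross_right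
      frag_cmul_sum frag_cmul_distrib2 power_add)

lemma raw_boundary_tuple:
  "raw_boundary (cube_tuple cs) =
     (\<Sum>r<length cs. frag_cmul ((-1) ^ offset cs r)
       (frag_extend (\<lambda>c'. frag_of (cube_tuple (cs[r := c']))) (raw_boundary (cs ! r))))"
  unfolding frag_extend_raw_boundary
  by (auto simp: raw_boundary_def sum_lessThan_sum_list cube_face_tuple frag_cmul_sum
      frag_cmul_distrib2 power_add take_map intro!: sum.cong)

text \<open>If \<open>c\<close> does not depend on its coordinate \<open>i\<close>, its two \<open>i\<close>-th faces coincide and all its
  other faces are again degenerate.\<close>
lemma nd_raw_boundary_degenerate:
  assumes "degenerate_cube c"
  shows "nd (raw_boundary c) = 0"
proof -
  obtain i where i: "i < fst c" and h: "\<And>x. x \<in> unit_cube (fst c) \<Longrightarrow> snd c x = snd c (x(i := 0))"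
    using assms unfolding degenerate_cube_def by blast
  obtain m where m: "fst c = Suc m" using i by (cases "fst c") auto
  have face_pair: "nd (frag_of (cube_face j 0 c)) - nd (frag_of (cube_face j 1 c)) = 0"
    if j: "j < fst c" for j
  proof (cases "j = i")
    case True
    have "cube_face j 0 c = cube_face j 1 c"
    proof (rule cube_eqI)
      fix x assume "x \<in> unit_cube (fst (cube_face j 0 c))"
      then have x: "x \<in> unit_cube m" using m by simp
      have "coord_ins j 1 x \<in> unit_cube (fst c)"
        using coord_ins_in_unit_cube[OF x, of j 1] j m by simp
      then have "snd c (coord_ins j 1 x) = snd c (coord_ins j 0 x)"
        using h coord_ins_zero_eq_fun_upd[of j x 1] True by simp
      then show "snd (cube_face j 0 c) x = snd (cube_face j 1 c) x"
        using x m by (simp add: snd_cube_face)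
    qed simp_all
    then show ?thesis by simp
  next
    case False
    let ?i' = "if i < j then i else i - 1"
    have "degenerate_cube (cube_face j e c)" if e: "0 \<le> e" "e \<le> 1" for e
      unfolding degenerate_cube_def
    proof (intro exI conjI ballI)
      show "?i' < fst (cube_face j e c)" using j i m False by auto
      fix x assume "x \<in> unit_cube (fst (cube_face j e c))"
      then have x: "x \<in> unit_cube m" using m by simp
      have x': "x(?i' := 0) \<in> unit_cube m"
        using x j i m False by (intro fun_upd_zero_in_unit_cube) auto
      have "coord_ins j e x \<in> unit_cube (fst c)"
        using coord_ins_in_unit_cube[OF x, of j e] j m e by simp
      then have "snd c (coord_ins j e x) = snd c (coord_ins j e (x(?i' := 0)))"
        using h coord_ins_fun_upd[of i j e x] False by simp
      then show "snd (cube_face j e c) x = snd (cube_face j e c) (x(?i' := 0))"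
        using x x' m by (simp add: snd_cube_face)
    qed
    then show ?thesis by (simp add: nd_of)
  qed
  have "nd (raw_boundary c) = (\<Sum>j<fst c. frag_cmul ((-1) ^ Suc j)
            (nd (frag_of (cube_face j 0 c)) - nd (frag_of (cube_face j 1 c))))"
    by (simp add: raw_boundary_def nd_sum nd_cmul nd_diff)
  also have "\<dots> = 0"
    using face_pair by simp
  finally show ?thesis .
qed

lemma frag_extend_cube_boundary_nd_of: "frag_extend cube_boundary (nd (frag_of c)) = nd (raw_boundary c)"
  using nd_raw_boundary_degenerate[of c] by (simp add: nd_of cube_boundary_eq_nd_raw_boundary)

definition phi_cube ::
  "(nat \<Rightarrow> (nat \<Rightarrow> real) \<Rightarrow> 'f \<Rightarrow> (nat \<Rightarrow> 'x loop) \<Rightarrow> 'g) \<Rightarrow> nat \<Rightarrow> 'f cube \<Rightarrow> 'x loop cube list \<Rightarrow> 'g cube"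
  where "phi_cube phi n a cs =
    cube_push (\<lambda>(t, a, gs). phi n t a gs) (cube_cross (id_cube n) (cube_cross a (cube_tuple cs)))"

definition action_cube :: "('a \<Rightarrow> 'x loop \<Rightarrow> 'a) \<Rightarrow> 'a cube \<Rightarrow> 'x loop cube \<Rightarrow> 'a cube" where
  "action_cube nu a c = cube_push (\<lambda>(b, g). nu b g) (cube_cross a c)"

definition pontryagin_cube :: "'x loop cube \<Rightarrow> 'x loop cube \<Rightarrow> 'x loop cube" where
  "pontryagin_cube c d = cube_push (\<lambda>(g, h). loop_concat g h) (cube_cross c d)"

lemma fst_action_cube [simp]: "fst (action_cube nu a c) = fst a + fst c"
  by (simp add: action_cube_def)

lemma fst_pontryagin_cube [simp]: "fst (pontryagin_cube c d) = fst c + fst d"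
  by (simp add: pontryagin_cube_def)

lemma chain_phi_eq: "chain_phi phi m ac = nd (frag_of (phi_cube phi (m - 1) (fst ac) (snd ac)))"
  by (simp add: chain_phi_def phi_cube_def)

lemma chain_nu_simps:
  "s = 1 \<Longrightarrow> chain_nu nu s ac = cube_boundary (fst ac)"
  "s = 2 \<Longrightarrow> chain_nu nu s (a, cs) = nd (frag_of (action_cube nu a (cs ! 0)))"
  "3 \<le> s \<Longrightarrow> chain_nu nu s ac = 0"
  by (simp_all add: chain_nu_def action_cube_def)

lemma chain_mu_simps:
  "s = 1 \<Longrightarrow> chain_mu s cs = cube_boundary (cs ! 0)"
  "s = 2 \<Longrightarrow> chain_mu s cs = nd (frag_of (pontryagin_cube (cs ! 0) (cs ! 1)))"
  "3 \<le> s \<Longrightarrow> chain_mu s cs = 0"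
  by (simp_all add: chain_mu_def pontryagin_cube_def)

lemma fst_phi_cube [simp]: "fst (phi_cube phi n a cs) = n + fst a + sum_list (map fst cs)"
  by (simp add: phi_cube_def)

lemma snd_phi_cube_extensional [simp]:
  "k = n + fst a + sum_list (map fst cs) \<Longrightarrow> snd (phi_cube phi n a cs) \<in> extensional (unit_cube k)"
  by (simp add: phi_cube_def)

lemma snd_phi_cube:
  assumes "x \<in> unit_cube (n + fst a + sum_list (map fst cs))"
  shows "snd (phi_cube phi n a cs) x =
    phi n (seg 0 n x) (snd a (seg n (fst a) x)) (snd (cube_tuple cs) (seg (n + fst a) (sum_list (map fst cs)) x))"
proof -
  have x: "x \<in> unit_cube (n + (fst a + sum_list (map fst cs)))"
    using assms by (simp add: add.assoc)
  then show ?thesis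
    using seg_in_unit_cube[OF x, of n] seg_in_unit_cube[OF x, of 0 n]
    by (simp add: phi_cube_def snd_cube_push snd_cube_cross snd_id_cube seg_seg)
qed

lemma degenerate_phi_cube_source: "degenerate_cube a \<Longrightarrow> degenerate_cube (phi_cube phi n a cs)"
  unfolding phi_cube_def
  by (intro degenerate_cube_push degenerate_cube_cross_right degenerate_cube_cross_left)

lemma degenerate_phi_cube_loop:
  "r < length cs \<Longrightarrow> degenerate_cube (cs ! r) \<Longrightarrow> degenerate_cube (phi_cube phi n a cs)"
  unfolding phi_cube_def
  by (intro degenerate_cube_push degenerate_cube_cross_right degenerate_cube_tuple)

lemma degenerate_action_cube: "degenerate_cube a \<Longrightarrow> degenerate_cube (action_cube nu a c)"
  unfolding action_cube_def by (intro degenerate_cube_push degenerate_cube_cross_left)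

lemma cube_face_phi_cube:
  assumes "j < n" "0 \<le> e" "e \<le> 1"
  shows "cube_face j e (phi_cube phi n a cs) =
    cube_push (\<lambda>(t, a, gs). phi n t a gs) (cube_cross (cube_face j e (id_cube n)) (cube_cross a (cube_tuple cs)))"
  using assms by (simp add: phi_cube_def cube_face_push cube_face_cross_left)

lemma snd_cube_face_phi_cube:
  assumes x: "x \<in> unit_cube (n - 1 + fst a + sum_list (map fst cs))" and "j < n" "0 \<le> e" "e \<le> 1"
  shows "snd (cube_face j e (phi_cube phi n a cs)) x =
    phi n (coord_ins j e (seg 0 (n - 1) x)) (snd a (seg (n - 1) (fst a) x))
      (snd (cube_tuple cs) (seg (n - 1 + fst a) (sum_list (map fst cs)) x))"
proof -
  have "coord_ins j e x \<in> unit_cube (n + fst a + sum_list (map fst cs))"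
    using coord_ins_in_unit_cube[OF x, of j e] assms by simp
  moreover have "seg 0 n (coord_ins j e x) = coord_ins j e (seg 0 (n - 1) x)"
    using seg_coord_ins_inside[of 0 j n e x] assms by simp
  moreover have "seg n m (coord_ins j e x) = seg (n - 1) m x" for m
    using seg_coord_ins_after[of j n m e x] assms by simp
  moreover have "seg (n + fst a) m (coord_ins j e x) = seg (n - 1 + fst a) m x" for m
    using seg_coord_ins_after[of j "n + fst a" m e x] assms by simp
  ultimately show ?thesis
    using x assms by (simp add: snd_cube_face snd_phi_cube)
qed

lemma raw_boundary_phi_cube:
  "raw_boundary (phi_cube phi n a cs) =
     (\<Sum>j<n. frag_cmul ((-1) ^ Suc j)
        (frag_of (cube_face j 0 (phi_cube phi n a cs)) - frag_of (cube_face j 1 (phi_cube phi n a cs))))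
   + frag_cmul ((-1) ^ n) (frag_extend (\<lambda>a'. frag_of (phi_cube phi n a' cs)) (raw_boundary a))
   + frag_cmul ((-1) ^ (n + fst a)) (\<Sum>r<length cs. frag_cmul ((-1) ^ offset cs r)
       (frag_extend (\<lambda>c'. frag_of (phi_cube phi n a (cs[r := c']))) (raw_boundary (cs ! r))))"
proof -
  have "(\<Sum>j<n. frag_cmul ((-1) ^ Suc j)
          (frag_of (cube_face j 0 (phi_cube phi n a cs)) - frag_of (cube_face j 1 (phi_cube phi n a cs)))) =
        frag_extend (\<lambda>t. frag_of (cube_push (\<lambda>(t, a, gs). phi n t a gs) (cube_cross t (cube_cross a (cube_tuple cs)))))
          (raw_boundary (id_cube n))"
    by (simp add: frag_extend_raw_boundary cube_face_phi_cube)
  then show ?thesis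
    unfolding phi_cube_def raw_boundary_push raw_boundary_cross raw_boundary_tuple
    by (simp add: frag_extend_add frag_extend_cmul frag_extend_sum frag_extend_frag_extend o_def
        frag_cmul_distrib2 power_add add.assoc)
qed

section \<open>The terms of the \<open>A\<^sub>\<infinity>\<close>-relation\<close>

definition source_boundary_term ::
  "(nat \<Rightarrow> (nat \<Rightarrow> real) \<Rightarrow> 'f \<Rightarrow> (nat \<Rightarrow> 'x loop) \<Rightarrow> 'g) \<Rightarrow> 'f cube \<Rightarrow> 'x loop cube list \<Rightarrow> ('g cube \<Rightarrow>\<^sub>0 int)"
  where "source_boundary_term phi a cs = frag_cmul ((-1) ^ length cs)
    (nd (frag_extend (\<lambda>a'. frag_of (phi_cube phi (length cs) a' cs)) (raw_boundary a)))"

definition loop_boundary_term ::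
  "(nat \<Rightarrow> (nat \<Rightarrow> real) \<Rightarrow> 'f \<Rightarrow> (nat \<Rightarrow> 'x loop) \<Rightarrow> 'g) \<Rightarrow> 'f cube \<Rightarrow> 'x loop cube list \<Rightarrow> ('g cube \<Rightarrow>\<^sub>0 int)"
  where "loop_boundary_term phi a cs = frag_cmul ((-1) ^ (length cs + fst a))
    (\<Sum>r<length cs. frag_cmul ((-1) ^ offset cs r)
       (nd (frag_extend (\<lambda>c'. frag_of (phi_cube phi (length cs) a (cs[r := c']))) (raw_boundary (cs ! r)))))"

definition source_action_term ::
  "(nat \<Rightarrow> (nat \<Rightarrow> real) \<Rightarrow> 'f \<Rightarrow> (nat \<Rightarrow> 'x loop) \<Rightarrow> 'g) \<Rightarrow> ('f \<Rightarrow> 'x loop \<Rightarrow> 'f)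
    \<Rightarrow> 'f cube \<Rightarrow> 'x loop cube list \<Rightarrow> ('g cube \<Rightarrow>\<^sub>0 int)"
  where "source_action_term phi nuF a cs = (if cs = [] then 0
    else nd (frag_of (phi_cube phi (length cs - 1) (action_cube nuF a (hd cs)) (tl cs))))"

definition loop_product_term ::
  "(nat \<Rightarrow> (nat \<Rightarrow> real) \<Rightarrow> 'f \<Rightarrow> (nat \<Rightarrow> 'x loop) \<Rightarrow> 'g) \<Rightarrow> 'f cube \<Rightarrow> 'x loop cube list \<Rightarrow> ('g cube \<Rightarrow>\<^sub>0 int)"
  where "loop_product_term phi a cs = (\<Sum>r<length cs - 1. frag_cmul ((-1) ^ Suc r)
    (nd (frag_of (phi_cube phi (length cs - 1) a
       (take r cs @ [pontryagin_cube (cs ! r) (cs ! Suc r)] @ drop (Suc (Suc r)) cs)))))"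

definition target_action_term ::
  "(nat \<Rightarrow> (nat \<Rightarrow> real) \<Rightarrow> 'f \<Rightarrow> (nat \<Rightarrow> 'x loop) \<Rightarrow> 'g) \<Rightarrow> ('g \<Rightarrow> 'x loop \<Rightarrow> 'g)
    \<Rightarrow> 'f cube \<Rightarrow> 'x loop cube list \<Rightarrow> ('g cube \<Rightarrow>\<^sub>0 int)"
  where "target_action_term phi nuG a cs = (if cs = [] then 0
    else frag_cmul ((-1) ^ length cs)
      (nd (frag_of (action_cube nuG (phi_cube phi (length cs - 1) a (butlast cs)) (last cs)))))"

lemma sum_atLeast1_atMost_two_terms:
  fixes g :: "nat \<Rightarrow> 'b::comm_monoid_add"
  assumes "\<And>s. 3 \<le> s \<Longrightarrow> g s = 0"
  shows "(\<Sum>s=1..M. g s) = (if 1 \<le> M then g 1 else 0) + (if 2 \<le> M then g 2 else 0)"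
proof (induction M)
  case (Suc M)
  then show ?case
    using assms[of "Suc M"] by (cases "M = 0"; cases "M = 1") (auto simp: numeral_2_eq_2)
qed simp

lemma sum_atLeast1_atMost_Suc_two_terms:
  fixes h :: "nat \<Rightarrow> 'b::comm_monoid_add"
  assumes "\<And>s. 1 \<le> s \<Longrightarrow> s < n \<Longrightarrow> h s = 0"
  shows "(\<Sum>s=1..Suc n. h s) = h (Suc n) + (if 1 \<le> n then h n else 0)"
proof (cases n)
  case (Suc m)
  have "(\<Sum>s=1..m. h s) = 0"
    using assms Suc by (intro sum.neutral) auto
  then show ?thesis
    using Suc by (simp add: add.commute)
qed simp

lemma sum_atLeast1_if_le:
  fixes f :: "nat \<Rightarrow> 'b::comm_monoid_add"
  assumes "m \<le> M"
  shows "(\<Sum>r=1..M. if r \<le> m then f r else 0) = (\<Sum>r<m. f (Suc r))"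
proof -
  have "(\<Sum>r=1..M. if r \<le> m then f r else 0) = sum f {r \<in> {1..M}. r \<le> m}"
    by (rule sum.inter_filter[symmetric]) simp
  also have "{r \<in> {1..M}. r \<le> m} = {Suc 0..m}"
    using assms by auto
  finally show ?thesis
    by (simp add: sum.atLeast1_atMost_eq)
qed

lemma sum_phi_nu_eq:
  assumes N: "N = Suc (length cs)"
  shows "(\<Sum>s=1..N. frag_cmul ((-1) ^ (s * (N - s)))
            (frag_extend (\<lambda>a'. chain_phi phi (N - s + 1) (a', drop (s - 1) cs)) (chain_nu nuF s (a, take (s - 1) cs))))
       = source_boundary_term phi a cs + source_action_term phi nuF a cs"
proof -
  define g where "g s = frag_cmul ((-1) ^ (s * (N - s)))
    (frag_extend (\<lambda>a'. chain_phi phi (N - s + 1) (a', drop (s - 1) cs)) (chain_nu nuF s (a, take (s - 1) cs)))" for s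
  have "(\<Sum>s=1..N. g s) = g 1 + (if 2 \<le> N then g 2 else 0)"
    using N sum_atLeast1_atMost_two_terms[of g N] by (simp add: g_def chain_nu_simps)
  moreover have "g 1 = source_boundary_term phi a cs"
  proof -
    have "frag_extend (\<lambda>a'. nd (frag_of (phi_cube phi (length cs) a' cs))) (nd (raw_boundary a)) =
          nd (frag_extend (\<lambda>a'. frag_of (phi_cube phi (length cs) a' cs)) (raw_boundary a))"
      by (rule frag_extend_nd_nd) (rule degenerate_phi_cube_source)
    then show ?thesis
      using N by (simp add: g_def source_boundary_term_def chain_nu_simps chain_phi_eq
          cube_boundary_eq_nd_raw_boundary)
  qed
  moreover have "(if 2 \<le> N then g 2 else 0) = source_action_term phi nuF a cs"
  proof (cases cs)
    case (Cons c cs')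
    have "frag_extend (\<lambda>a'. nd (frag_of (phi_cube phi (length cs') a' cs'))) (nd (frag_of (action_cube nuF a c))) =
          nd (frag_of (phi_cube phi (length cs') (action_cube nuF a c) cs'))"
      by (rule frag_extend_nd_nd_of) (rule degenerate_phi_cube_source)
    then show ?thesis
      using N Cons by (simp add: g_def source_action_term_def chain_nu_simps chain_phi_eq)
  qed (use N in \<open>simp add: source_action_term_def\<close>)
  ultimately show ?thesis
    by (simp add: g_def)
qed

lemma sum_nu_phi_eq:
  assumes N: "N = Suc (length cs)"
  shows "(\<Sum>s=1..N. frag_cmul ((-1) ^ ((s + 1) * (N - s)))
            (frag_extend (\<lambda>b. chain_nu nuG (N - s + 1) (b, drop (s - 1) cs)) (chain_phi phi s (a, take (s - 1) cs))))
       = nd (raw_boundary (phi_cube phi (length cs) a cs)) - target_action_term phi nuG a cs"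
proof -
  define n where "n = length cs"
  define h where "h s = frag_cmul ((-1) ^ ((s + 1) * (N - s)))
    (frag_extend (\<lambda>b. chain_nu nuG (N - s + 1) (b, drop (s - 1) cs)) (chain_phi phi s (a, take (s - 1) cs)))" for s
  have "(\<Sum>s=1..Suc n. h s) = h (Suc n) + (if 1 \<le> n then h n else 0)"
  proof (rule sum_atLeast1_atMost_Suc_two_terms)
    fix s assume "1 \<le> s" "s < n"
    then have "chain_nu nuG (N - s + 1) p = 0" for p
      using N n_def by (intro chain_nu_simps(3)) simp
    then show "h s = 0"
      by (simp add: h_def frag_extend_eq_0)
  qed
  moreover have "h (Suc n) = nd (raw_boundary (phi_cube phi n a cs))"
    using N n_def by (simp add: h_def chain_nu_simps chain_phi_eq frag_extend_cube_boundary_nd_of)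
  moreover have "(if 1 \<le> n then h n else 0) = - target_action_term phi nuG a cs"
  proof (cases "cs = []")
    case False
    then have "drop (n - 1) cs ! 0 = last cs" "take (n - 1) cs = butlast cs" "1 \<le> n"
      using n_def by (simp_all add: last_conv_nth butlast_conv_take Suc_leI)
    moreover have "frag_extend (\<lambda>b. nd (frag_of (action_cube nuG b (last cs))))
                     (nd (frag_of (phi_cube phi (n - 1) a (butlast cs)))) =
                   nd (frag_of (action_cube nuG (phi_cube phi (n - 1) a (butlast cs)) (last cs)))"
      by (rule frag_extend_nd_nd_of) (rule degenerate_action_cube)
    moreover have "N - n + 1 = 2" "(n + 1) * (N - n) = Suc n"
      using N n_def by simp_all
    ultimately show ?thesis
      using False n_def by (simp add: h_def target_action_term_def chain_nu_simps chain_phi_eq)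
  qed (simp add: n_def target_action_term_def)
  ultimately show ?thesis
    using N n_def by (simp add: h_def)
qed

lemma sum_phi_mu_eq:
  assumes N: "N = Suc (length cs)"
  shows "(\<Sum>r=1..N. \<Sum>s=1..N - r. frag_cmul ((-1) ^ (r + s * (N - r - s))
                                  * (-1) ^ (s * (fst a + sum_list (map fst (take (r - 1) cs)))))
            (frag_extend (\<lambda>c. chain_phi phi (r + (N - r - s) + 1) (a, take (r - 1) cs @ [c] @ drop (r - 1 + s) cs))
                         (chain_mu s (take s (drop (r - 1) cs)))))
       = loop_boundary_term phi a cs + loop_product_term phi a cs"
proof -
  define n where "n = length cs"
  define k where "k r s = frag_cmul ((-1) ^ (r + s * (N - r - s))
                                  * (-1) ^ (s * (fst a + sum_list (map fst (take (r - 1) cs)))))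
            (frag_extend (\<lambda>c. chain_phi phi (r + (N - r - s) + 1) (a, take (r - 1) cs @ [c] @ drop (r - 1 + s) cs))
                         (chain_mu s (take s (drop (r - 1) cs))))" for r s
  have inner: "(\<Sum>s=1..N - r. k r s) = (if r \<le> n then k r 1 else 0) + (if r \<le> n - 1 then k r 2 else 0)"
    if "r \<in> {1..N}" for r
    using that N n_def sum_atLeast1_atMost_two_terms[of "k r" "N - r"]
    by (auto simp: k_def chain_mu_simps)
  have "(\<Sum>r=1..N. \<Sum>s=1..N - r. k r s) =
        (\<Sum>r=1..N. (if r \<le> n then k r 1 else 0) + (if r \<le> n - 1 then k r 2 else 0))"
    by (rule sum.cong[OF refl]) (rule inner)
  also have "\<dots> = (\<Sum>r<n. k (Suc r) 1) + (\<Sum>r<n - 1. k (Suc r) 2)"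
  proof -
    have "n \<le> N" "n - 1 \<le> N" using N n_def by simp_all
    then show ?thesis
      by (simp only: sum.distrib sum_atLeast1_if_le)
  qed
  finally have "(\<Sum>r=1..N. \<Sum>s=1..N - r. k r s) = (\<Sum>r<n. k (Suc r) 1) + (\<Sum>r<n - 1. k (Suc r) 2)" .
  moreover have "k (Suc r) 1 = frag_cmul ((-1) ^ (n + fst a)) (frag_cmul ((-1) ^ offset cs r)
      (nd (frag_extend (\<lambda>c'. frag_of (phi_cube phi n a (cs[r := c']))) (raw_boundary (cs ! r)))))"
    if r: "r < n" for r
  proof -
    have "take r cs @ [c] @ drop (Suc r) cs = cs[r := c]" for c
      using r n_def by (simp add: upd_conv_take_nth_drop)
    moreover have "take 1 (drop r cs) ! 0 = cs ! r" "Suc r + (N - Suc r - 1) + 1 = N"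
      using r n_def N by simp_all
    moreover have "frag_extend (\<lambda>c. nd (frag_of (phi_cube phi n a (cs[r := c])))) (nd (raw_boundary (cs ! r))) =
                   nd (frag_extend (\<lambda>c. frag_of (phi_cube phi n a (cs[r := c]))) (raw_boundary (cs ! r)))"
      using r n_def by (intro frag_extend_nd_nd degenerate_phi_cube_loop[where r = r]) auto
    moreover have "Suc (length cs - 1) = n"
      using r n_def by simp
    ultimately show ?thesis
      using N by (simp add: k_def chain_mu_simps chain_phi_eq cube_boundary_eq_nd_raw_boundary power_add mult.assoc)
  qed
  moreover have "k (Suc r) 2 = frag_cmul ((-1) ^ Suc r) (nd (frag_of (phi_cube phi (n - 1) a
      (take r cs @ [pontryagin_cube (cs ! r) (cs ! Suc r)] @ drop (Suc (Suc r)) cs))))"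
    if r: "r < n - 1" for r
  proof -
    have "take 2 (drop r cs) ! 0 = cs ! r" "take 2 (drop r cs) ! 1 = cs ! Suc r"
      "Suc r + (N - Suc r - 2) + 1 = n"
      using r n_def N by auto
    moreover have "frag_extend (\<lambda>c. nd (frag_of (phi_cube phi (n - 1) a (take r cs @ [c] @ drop (Suc (Suc r)) cs))))
        (nd (frag_of (pontryagin_cube (cs ! r) (cs ! Suc r)))) =
      nd (frag_of (phi_cube phi (n - 1) a (take r cs @ [pontryagin_cube (cs ! r) (cs ! Suc r)] @ drop (Suc (Suc r)) cs)))"
      using r n_def
      by (intro frag_extend_nd_nd_of degenerate_phi_cube_loop[where r = r]) (auto simp: nth_append)
    moreover have "(-1::int) ^ (Suc r + 2 * (N - Suc r - 2)) * (-1) ^ (2 * (fst a + offset cs r)) = (-1) ^ Suc r"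
      by (simp add: power_add power_mult)
    ultimately show ?thesis
      by (simp add: k_def chain_mu_simps chain_phi_eq numeral_2_eq_2)
  qed
  ultimately show ?thesis
    unfolding k_def[symmetric]
    by (simp add: loop_boundary_term_def loop_product_term_def n_def frag_cmul_sum)
qed

section \<open>The boundary conditions on the faces of \<open>I\<^sup>n\<close>\<close>

lemma singular_cube_in_topspace:
  "singular_cube Y c \<Longrightarrow> x \<in> unit_cube (fst c) \<Longrightarrow> snd c x \<in> topspace Y"
  unfolding singular_cube_def cube_top_def
  using continuous_map_image_subset_topspace by fastforce

lemma snd_cube_tuple_in_topspace:
  assumes "\<forall>c\<in>set cs. singular_cube (Omega_top X x0) c" "x \<in> unit_cube (sum_list (map fst cs))"
  shows "snd (cube_tuple cs) x \<in> topspace (Omega_pow X x0 (length cs))"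
proof -
  have "snd (cs ! i) (seg (offset cs i) (fst (cs ! i)) x) \<in> topspace (Omega_top X x0)"
    if "i < length cs" for i
    using assms that by (intro singular_cube_in_topspace seg_in_unit_cube) auto
  then show ?thesis
    using assms(2) by (simp add: snd_cube_tuple Omega_pow_def topspace_product_topology)
qed

lemma top_ainf_morphismD:
  assumes "top_ainf_morphism X x0 F nuF G nuG phi" "1 \<le> n" "t \<in> unit_cube n" "a \<in> topspace F"
    "gs \<in> topspace (Omega_pow X x0 n)"
  shows "t 0 = 1 \<Longrightarrow> phi n t a gs =
           phi (n - 1) (del_coord 0 t) (nuF a (gs 0)) (restrict (\<lambda>i. gs (Suc i)) {..<n - 1})"
    and "1 \<le> k \<Longrightarrow> k < n \<Longrightarrow> t k = 1 \<Longrightarrow> phi n t a gs =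
           phi (n - 1) (del_coord k t) a
               (restrict (\<lambda>i. if i < k - 1 then gs i
                               else if i = k - 1 then loop_concat (gs (k - 1)) (gs k)
                               else gs (Suc i)) {..<n - 1})"
    and "k < n \<Longrightarrow> t k = 0 \<Longrightarrow> phi n t a gs =
           nuG (phi k (trunc_coord k t) a (restrict gs {..<k})) (loop_prod (map gs [k..<n]))"
  using assms unfolding top_ainf_morphism_def by blast+

context
  fixes X :: "'x topology" and x0 :: 'x
    and F :: "'f topology" and nuF :: "'f \<Rightarrow> 'x loop \<Rightarrow> 'f"
    and G :: "'g topology" and nuG :: "'g \<Rightarrow> 'x loop \<Rightarrow> 'g"
    and phi :: "nat \<Rightarrow> (nat \<Rightarrow> real) \<Rightarrow> 'f \<Rightarrow> (nat \<Rightarrow> 'x loop) \<Rightarrow> 'g"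
  assumes morphism: "top_ainf_morphism X x0 F nuF G nuG phi"
begin

text \<open>By the condition at \<open>t\<^sub>j = 0\<close> the map on this face factors through \<open>trunc_coord j\<close>, so
  the face does not depend on its own coordinate \<open>j\<close> (the former coordinate \<open>j + 1\<close>).\<close>
lemma degenerate_cube_face_phi_cube_zero:
  assumes a: "singular_cube F a" and cs: "\<forall>c\<in>set cs. singular_cube (Omega_top X x0) c"
    and n: "length cs = n" and j: "Suc j < n"
  shows "degenerate_cube (cube_face j 0 (phi_cube phi n a cs))"
  unfolding degenerate_cube_def
proof (intro exI conjI ballI)
  let ?Q = "sum_list (map fst cs)"
  show "j < fst (cube_face j 0 (phi_cube phi n a cs))" using j by simp
  fix x assume "x \<in> unit_cube (fst (cube_face j 0 (phi_cube phi n a cs)))"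
  then have x: "x \<in> unit_cube (n - 1 + fst a + ?Q)" using j by simp
  have x': "x(j := 0) \<in> unit_cube (n - 1 + fst a + ?Q)"
    using x j by (intro fun_upd_zero_in_unit_cube) auto
  let ?t = "seg 0 (n - 1) x"
  let ?\<alpha> = "snd a (seg (n - 1) (fst a) x)"
  let ?gs = "snd (cube_tuple cs) (seg (n - 1 + fst a) ?Q x)"
  have t: "?t \<in> unit_cube (n - 1)" by (rule seg_in_unit_cube[OF x])
  have \<alpha>: "?\<alpha> \<in> topspace F"
    by (rule singular_cube_in_topspace[OF a seg_in_unit_cube[OF x]])
  have gs: "?gs \<in> topspace (Omega_pow X x0 n)"
    using snd_cube_tuple_in_topspace[OF cs seg_in_unit_cube[OF x]] n by simp
  have t0: "coord_ins j 0 ?t \<in> unit_cube n"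
    using coord_ins_in_unit_cube[OF t, of j 0] j by simp
  have t0': "coord_ins j 0 (?t(j := 0)) \<in> unit_cube n"
    using coord_ins_in_unit_cube[OF fun_upd_zero_in_unit_cube[OF t], of j j 0] j by simp
  have trunc: "trunc_coord j (coord_ins j 0 (?t(j := 0))) = trunc_coord j (coord_ins j 0 ?t)"
    unfolding trunc_coord_def coord_ins_def by (rule ext) auto
  have ins_j: "coord_ins j 0 w j = 0" for w :: "nat \<Rightarrow> real"
    by (simp add: coord_ins_def)
  have j': "j < n" using j by simp
  have "snd (cube_face j 0 (phi_cube phi n a cs)) x = phi n (coord_ins j 0 ?t) ?\<alpha> ?gs"
    using snd_cube_face_phi_cube[OF x j', where e = 0 and phi = phi] by simp
  also have "\<dots> = phi n (coord_ins j 0 (?t(j := 0))) ?\<alpha> ?gs"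
    using top_ainf_morphismD(3)[OF morphism _ t0 \<alpha> gs, of j]
      top_ainf_morphismD(3)[OF morphism _ t0' \<alpha> gs, of j] j ins_j trunc by simp
  also have "\<dots> = snd (cube_face j 0 (phi_cube phi n a cs)) (x(j := 0))"
  proof -
    have "seg 0 (n - 1) (x(j := 0)) = ?t(j := 0)"
      using j by (simp add: seg_fun_upd_inside)
    moreover have "seg (n - 1) m (x(j := 0)) = seg (n - 1) m x" for m
      using j by (intro seg_fun_upd_outside) linarith
    moreover have "seg (n - 1 + fst a) m (x(j := 0)) = seg (n - 1 + fst a) m x" for m
      using j by (intro seg_fun_upd_outside) linarith
    ultimately show ?thesis
      using snd_cube_face_phi_cube[OF x' j', where e = 0 and phi = phi] by simp
  qed
  finally show "snd (cube_face j 0 (phi_cube phi n a cs)) x =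
                snd (cube_face j 0 (phi_cube phi n a cs)) (x(j := 0))" .
qed

lemma cube_face_phi_cube_last_zero:
  assumes a: "singular_cube F a" and cs: "\<forall>c\<in>set (cs @ [c]). singular_cube (Omega_top X x0) c"
    and n: "length cs + 1 = n"
  shows "cube_face (n - 1) 0 (phi_cube phi n a (cs @ [c])) = action_cube nuG (phi_cube phi (n - 1) a cs) c"
  unfolding action_cube_def
proof (rule cube_eqI)
  let ?Q = "sum_list (map fst cs)"
  let ?D = "n - 1 + fst a + ?Q"
  fix x assume "x \<in> unit_cube (fst (cube_face (n - 1) 0 (phi_cube phi n a (cs @ [c]))))"
  then have x: "x \<in> unit_cube (n - 1 + fst a + sum_list (map fst (cs @ [c])))" using n by simp
  have xD: "x \<in> unit_cube (?D + fst c)" using x by (simp add: add.assoc)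
  let ?t = "seg 0 (n - 1) x"
  let ?\<alpha> = "snd a (seg (n - 1) (fst a) x)"
  let ?gs = "snd (cube_tuple (cs @ [c])) (seg (n - 1 + fst a) (sum_list (map fst (cs @ [c]))) x)"
  have t: "?t \<in> unit_cube (n - 1)" by (rule seg_in_unit_cube[OF x])
  have \<alpha>: "?\<alpha> \<in> topspace F"
    by (rule singular_cube_in_topspace[OF a seg_in_unit_cube[OF x]])
  have gs: "?gs \<in> topspace (Omega_pow X x0 n)"
    using snd_cube_tuple_in_topspace[OF cs seg_in_unit_cube[OF x]] n by simp
  have t0: "coord_ins (n - 1) 0 ?t \<in> unit_cube n"
    using coord_ins_in_unit_cube[OF t, of "n - 1" 0] n by simp
  have trunc: "trunc_coord (n - 1) (coord_ins (n - 1) 0 ?t) = ?t"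
    unfolding trunc_coord_def coord_ins_def seg_def by (rule ext) auto
  have gs_eq: "?gs = restrict (\<lambda>i. snd ((cs @ [c]) ! i)
      (seg (n - 1 + fst a + offset (cs @ [c]) i) (fst ((cs @ [c]) ! i)) x)) {..<length (cs @ [c])}"
    by (rule snd_cube_tuple_seg[OF x])
  have n': "n - 1 = length cs" using n by simp
  have gs_last: "?gs (n - 1) = snd c (seg ?D (fst c) x)"
    unfolding gs_eq using n' by (simp add: nth_append add.assoc)
  have gs_init: "restrict ?gs {..<n - 1} = snd (cube_tuple cs) (seg (n - 1 + fst a) ?Q x)"
    using n' unfolding gs_eq snd_cube_tuple_seg[OF x, where cs = cs]
    by (auto simp: nth_append intro!: restrict_ext)
  have "snd (cube_face (n - 1) 0 (phi_cube phi n a (cs @ [c]))) x = phi n (coord_ins (n - 1) 0 ?t) ?\<alpha> ?gs"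
    using snd_cube_face_phi_cube[OF x, of "n - 1" 0] n by simp
  also have "\<dots> = nuG (phi (n - 1) ?t ?\<alpha> (snd (cube_tuple cs) (seg (n - 1 + fst a) ?Q x)))
                      (snd c (seg ?D (fst c) x))"
    using top_ainf_morphismD(3)[OF morphism _ t0 \<alpha> gs, of "n - 1"] n trunc gs_last gs_init
    by (simp add: coord_ins_def upt_rec)
  also have "\<dots> = snd (cube_push (\<lambda>(b, g). nuG b g) (cube_cross (phi_cube phi (n - 1) a cs) c)) x"
  proof -
    have y: "seg 0 ?D x \<in> unit_cube ?D" by (rule seg_in_unit_cube[OF xD])
    then have "snd (phi_cube phi (n - 1) a cs) (seg 0 ?D x) =
               phi (n - 1) ?t ?\<alpha> (snd (cube_tuple cs) (seg (n - 1 + fst a) ?Q x))"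
      using snd_phi_cube[OF y, where phi = phi] by (simp add: seg_seg)
    then show ?thesis
      using xD y by (simp add: snd_cube_push snd_cube_cross)
  qed
  finally show "snd (cube_face (n - 1) 0 (phi_cube phi n a (cs @ [c]))) x =
                snd (cube_push (\<lambda>(b, g). nuG b g) (cube_cross (phi_cube phi (n - 1) a cs) c)) x" .
qed (use n in simp_all)

lemma cube_face_phi_cube_first_one:
  assumes a: "singular_cube F a" and cs: "\<forall>c\<in>set (c # cs). singular_cube (Omega_top X x0) c"
    and n: "length cs + 1 = n"
  shows "cube_face 0 1 (phi_cube phi n a (c # cs)) = phi_cube phi (n - 1) (action_cube nuF a c) cs"
proof (rule cube_eqI)
  let ?Q = "sum_list (map fst cs)"
  let ?a' = "action_cube nuF a c"
  fix x assume "x \<in> unit_cube (fst (cube_face 0 1 (phi_cube phi n a (c # cs))))"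
  then have x: "x \<in> unit_cube (n - 1 + fst a + sum_list (map fst (c # cs)))" using n by simp
  have x': "x \<in> unit_cube (n - 1 + fst ?a' + ?Q)"
    using x by (simp add: action_cube_def add.assoc)
  let ?t = "seg 0 (n - 1) x"
  let ?\<alpha> = "snd a (seg (n - 1) (fst a) x)"
  let ?gs = "snd (cube_tuple (c # cs)) (seg (n - 1 + fst a) (sum_list (map fst (c # cs))) x)"
  have t: "?t \<in> unit_cube (n - 1)" by (rule seg_in_unit_cube[OF x])
  have \<alpha>: "?\<alpha> \<in> topspace F"
    by (rule singular_cube_in_topspace[OF a seg_in_unit_cube[OF x]])
  have gs: "?gs \<in> topspace (Omega_pow X x0 n)"
    using snd_cube_tuple_in_topspace[OF cs seg_in_unit_cube[OF x]] n by simp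
  have t1: "coord_ins 0 1 ?t \<in> unit_cube n"
    using coord_ins_in_unit_cube[OF t, of 0 1] n by simp
  have del: "del_coord 0 (coord_ins 0 1 ?t) = ?t"
    unfolding del_coord_def coord_ins_def by (rule ext) auto
  have gs_eq: "?gs = restrict (\<lambda>i. snd ((c # cs) ! i)
      (seg (n - 1 + fst a + offset (c # cs) i) (fst ((c # cs) ! i)) x)) {..<length (c # cs)}"
    by (rule snd_cube_tuple_seg[OF x])
  have gs_first: "?gs 0 = snd c (seg (n - 1 + fst a) (fst c) x)"
    unfolding gs_eq by simp
  have n': "n - 1 = length cs" using n by simp
  have gs_tail: "restrict (\<lambda>i. ?gs (Suc i)) {..<n - 1} = snd (cube_tuple cs) (seg (n - 1 + fst ?a') ?Q x)"
    using n' unfolding gs_eq snd_cube_tuple_seg[OF x, where cs = cs]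
    by (auto simp: action_cube_def add.assoc intro!: restrict_ext)
  have "snd (cube_face 0 1 (phi_cube phi n a (c # cs))) x = phi n (coord_ins 0 1 ?t) ?\<alpha> ?gs"
    using snd_cube_face_phi_cube[OF x, of 0 1] n by simp
  also have "\<dots> = phi (n - 1) ?t (nuF ?\<alpha> (snd c (seg (n - 1 + fst a) (fst c) x)))
                    (snd (cube_tuple cs) (seg (n - 1 + fst ?a') ?Q x))"
    using top_ainf_morphismD(1)[OF morphism _ t1 \<alpha> gs] n del gs_first gs_tail
    by (simp add: coord_ins_def)
  also have "\<dots> = snd (phi_cube phi (n - 1) ?a' cs) x"
    using seg_in_unit_cube[OF x, of "n - 1" "fst a + fst c"] snd_phi_cube[OF x', where phi = phi]
    by (simp add: action_cube_def snd_cube_push snd_cube_cross seg_seg)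
  finally show "snd (cube_face 0 1 (phi_cube phi n a (c # cs))) x = snd (phi_cube phi (n - 1) ?a' cs) x" .
qed (use n in \<open>simp_all add: action_cube_def\<close>)

lemma cube_face_phi_cube_one:
  assumes a: "singular_cube F a" and cs: "\<forall>c\<in>set (A @ [c, d] @ B). singular_cube (Omega_top X x0) c"
    and n: "length (A @ [c, d] @ B) = n" and j: "length A + 1 = j"
  shows "cube_face j 1 (phi_cube phi n a (A @ [c, d] @ B)) =
         phi_cube phi (n - 1) a (A @ [pontryagin_cube c d] @ B)"
proof (rule cube_eqI)
  let ?cs = "A @ [c, d] @ B"
  let ?cs' = "A @ [pontryagin_cube c d] @ B"
  let ?K = "n - 1 + fst a"
  have dim: "sum_list (map fst ?cs') = sum_list (map fst ?cs)"
    by (simp add: pontryagin_cube_def)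
  show "fst (cube_face j 1 (phi_cube phi n a ?cs)) = fst (phi_cube phi (n - 1) a ?cs')"
    using n dim by simp
  fix x assume "x \<in> unit_cube (fst (cube_face j 1 (phi_cube phi n a ?cs)))"
  then have x: "x \<in> unit_cube (?K + sum_list (map fst ?cs))" using n by simp
  have x': "x \<in> unit_cube (?K + sum_list (map fst ?cs'))" using x by (simp only: dim)
  let ?t = "seg 0 (n - 1) x"
  let ?\<alpha> = "snd a (seg (n - 1) (fst a) x)"
  let ?gs = "snd (cube_tuple ?cs) (seg ?K (sum_list (map fst ?cs)) x)"
  have t: "?t \<in> unit_cube (n - 1)" by (rule seg_in_unit_cube[OF x])
  have \<alpha>: "?\<alpha> \<in> topspace F"
    by (rule singular_cube_in_topspace[OF a seg_in_unit_cube[OF x]])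
  have gs: "?gs \<in> topspace (Omega_pow X x0 n)"
    using snd_cube_tuple_in_topspace[OF cs seg_in_unit_cube[OF x]] n by simp
  have t1: "coord_ins j 1 ?t \<in> unit_cube n"
    using coord_ins_in_unit_cube[OF t, of j 1] n j by simp
  have del: "del_coord j (coord_ins j 1 ?t) = ?t"
    unfolding del_coord_def coord_ins_def by (rule ext) auto
  have gs_eq: "?gs = restrict (\<lambda>i. snd (?cs ! i) (seg (?K + offset ?cs i) (fst (?cs ! i)) x)) {..<length ?cs}"
    by (rule snd_cube_tuple_seg[OF x])
  have factor: "(if i < j - 1 then ?gs i else if i = j - 1 then loop_concat (?gs (j - 1)) (?gs j)
                 else ?gs (Suc i)) = snd (?cs' ! i) (seg (?K + offset ?cs' i) (fst (?cs' ! i)) x)"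
    if i: "i < n - 1" for i
  proof -
    have j': "j - 1 = length A" "j = Suc (length A)" using j by simp_all
    consider "i < length A" | "i = length A" | "length A < i" by linarith
    then show ?thesis
    proof cases
      case 1
      then show ?thesis
        using n unfolding gs_eq j'(1) by (simp add: nth_append)
    next
      case 2
      have "seg (?K + sum_list (map fst A)) (fst c + fst d) x \<in> unit_cube (fst c + fst d)"
        by (rule seg_in_unit_cube[OF x])
      then have "snd (pontryagin_cube c d) (seg (?K + sum_list (map fst A)) (fst c + fst d) x) =
            loop_concat (snd c (seg (?K + sum_list (map fst A)) (fst c) x))
                        (snd d (seg (?K + sum_list (map fst A) + fst c) (fst d) x))"
        by (simp add: pontryagin_cube_def snd_cube_push snd_cube_cross seg_seg add.assoc)
      then show ?thesis
        using 2 n unfolding gs_eq j'(1) by (simp add: nth_append add.assoc j'(2))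
    next
      case 3
      then obtain m where m: "i = Suc (length A) + m"
        by (metis add_Suc less_iff_Suc_add)
      have "take (Suc (Suc (length A)) + m) ?cs = A @ [c, d] @ take m B"
        and "take (Suc (length A) + m) ?cs' = A @ [pontryagin_cube c d] @ take m B"
        by simp_all
      moreover have "Suc (Suc (length A + m)) < n" using i m n by simp
      ultimately show ?thesis
        using 3 i n m unfolding gs_eq j'(1) by (simp add: nth_append add.assoc pontryagin_cube_def)
    qed
  qed
  have gs_concat: "restrict (\<lambda>i. if i < j - 1 then ?gs i else if i = j - 1 then loop_concat (?gs (j - 1)) (?gs j)
                     else ?gs (Suc i)) {..<n - 1} = snd (cube_tuple ?cs') (seg ?K (sum_list (map fst ?cs')) x)"
    unfolding snd_cube_tuple_seg[OF x', where cs = ?cs'] using factor n by (auto intro!: restrict_ext)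
  have "snd (cube_face j 1 (phi_cube phi n a ?cs)) x = phi n (coord_ins j 1 ?t) ?\<alpha> ?gs"
    using snd_cube_face_phi_cube[OF x[folded add.assoc], of j 1] n j by simp
  also have "\<dots> = phi (n - 1) ?t ?\<alpha> (snd (cube_tuple ?cs') (seg ?K (sum_list (map fst ?cs')) x))"
    using top_ainf_morphismD(2)[OF morphism _ t1 \<alpha> gs, of j] n j del gs_concat
    by (simp add: coord_ins_def)
  also have "\<dots> = snd (phi_cube phi (n - 1) a ?cs') x"
    using snd_phi_cube[OF x', where phi = phi] by simp
  finally show "snd (cube_face j 1 (phi_cube phi n a ?cs)) x = snd (phi_cube phi (n - 1) a ?cs') x" .
qed (use n in simp_all)

lemma nd_faces_phi_cube:
  assumes a: "singular_cube F a" and cs: "\<forall>c\<in>set cs. singular_cube (Omega_top X x0) c"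
  shows "(\<Sum>j<length cs. frag_cmul ((-1) ^ Suc j)
            (nd (frag_of (cube_face j 0 (phi_cube phi (length cs) a cs)))
           - nd (frag_of (cube_face j 1 (phi_cube phi (length cs) a cs)))))
       = target_action_term phi nuG a cs + source_action_term phi nuF a cs + loop_product_term phi a cs"
proof (cases "cs = []")
  case False
  define n where "n = length cs"
  define T where "T j e = nd (frag_of (cube_face j e (phi_cube phi n a cs)))" for j e
  obtain m where m: "n = Suc m"
    using False n_def by (cases cs) auto
  have "(\<Sum>j<n. frag_cmul ((-1) ^ Suc j) (T j 0)) = frag_cmul ((-1) ^ n) (T m 0)"
  proof -
    have "T j 0 = 0" if "j < m" for j
      using degenerate_cube_face_phi_cube_zero[OF a cs n_def[symmetric], of j] that m
      by (simp add: T_def nd_of)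
    then show ?thesis
      using m by simp
  qed
  also have "\<dots> = target_action_term phi nuG a cs"
  proof -
    have "cs = butlast cs @ [last cs]"
      using False by simp
    then have "T m 0 = nd (frag_of (action_cube nuG (phi_cube phi m a (butlast cs)) (last cs)))"
      using cube_face_phi_cube_last_zero[OF a, of "butlast cs" "last cs" n] cs m n_def
      by (simp add: T_def)
    then show ?thesis
      using False m n_def by (simp add: target_action_term_def)
  qed
  finally have zero_faces: "(\<Sum>j<n. frag_cmul ((-1) ^ Suc j) (T j 0)) = target_action_term phi nuG a cs" .
  have first: "T 0 1 = source_action_term phi nuF a cs"
  proof -
    have "cs = hd cs # tl cs"
      using False by simp
    then have "T 0 1 = nd (frag_of (phi_cube phi m (action_cube nuF a (hd cs)) (tl cs)))"
      using cube_face_phi_cube_first_one[OF a, of "hd cs" "tl cs" n] cs m n_def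
      by (simp add: T_def)
    then show ?thesis
      using False m n_def by (simp add: source_action_term_def)
  qed
  have inner: "T (Suc r) 1 = nd (frag_of (phi_cube phi m a
                 (take r cs @ [pontryagin_cube (cs ! r) (cs ! Suc r)] @ drop (Suc (Suc r)) cs)))"
    if r: "r < m" for r
  proof -
    have split: "cs = take r cs @ [cs ! r, cs ! Suc r] @ drop (Suc (Suc r)) cs"
      using r m n_def by (simp add: Cons_nth_drop_Suc)
    have "\<forall>c\<in>set (take r cs @ [cs ! r, cs ! Suc r] @ drop (Suc (Suc r)) cs). singular_cube (Omega_top X x0) c"
      and "length (take r cs @ [cs ! r, cs ! Suc r] @ drop (Suc (Suc r)) cs) = n"
      using cs n_def split by metis+
    from cube_face_phi_cube_one[OF a this] r
    have "cube_face (Suc r) 1 (phi_cube phi n a (take r cs @ [cs ! r, cs ! Suc r] @ drop (Suc (Suc r)) cs)) =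
          phi_cube phi m a (take r cs @ [pontryagin_cube (cs ! r) (cs ! Suc r)] @ drop (Suc (Suc r)) cs)"
      using m n_def by simp
    then show ?thesis
      using split by (simp add: T_def)
  qed
  have "(\<Sum>j<n. frag_cmul ((-1) ^ Suc j) (T j 1)) =
        - T 0 1 - (\<Sum>r<m. frag_cmul ((-1) ^ Suc r) (T (Suc r) 1))"
    unfolding m sum.lessThan_Suc_shift by (simp add: sum_negf[symmetric] del: sum.lessThan_Suc)
  also have "\<dots> = - (source_action_term phi nuF a cs + loop_product_term phi a cs)"
    using m n_def by (simp add: first inner loop_product_term_def)
  finally have one_faces:
    "(\<Sum>j<n. frag_cmul ((-1) ^ Suc j) (T j 1)) = - (source_action_term phi nuF a cs + loop_product_term phi a cs)" .
  show ?thesis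
    using zero_faces one_faces
    by (simp add: T_def n_def[symmetric] frag_cmul_diff_distrib2 sum_subtractf)
qed (simp add: target_action_term_def source_action_term_def loop_product_term_def)

lemma nd_raw_boundary_phi_cube:
  assumes "singular_cube F a" "\<forall>c\<in>set cs. singular_cube (Omega_top X x0) c"
  shows "nd (raw_boundary (phi_cube phi (length cs) a cs)) =
           target_action_term phi nuG a cs + source_action_term phi nuF a cs + loop_product_term phi a cs
         + source_boundary_term phi a cs + loop_boundary_term phi a cs"
  using nd_faces_phi_cube[OF assms]
  by (simp add: raw_boundary_phi_cube nd_add nd_diff nd_cmul nd_sum
      source_boundary_term_def loop_boundary_term_def)

lemma chain_phi_ainf_relation:
  assumes a: "singular_cube F a" and cs: "\<forall>c\<in>set cs. singular_cube (Omega_top X x0) c"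
    and N: "N = Suc (length cs)"
  shows "(\<Sum>s=1..N. frag_cmul ((-1) ^ (s * (N - s)))
            (frag_extend (\<lambda>a'. chain_phi phi (N - s + 1) (a', drop (s - 1) cs)) (chain_nu nuF s (a, take (s - 1) cs))))
     + (\<Sum>r=1..N. \<Sum>s=1..N - r. frag_cmul ((-1) ^ (r + s * (N - r - s))
                                  * (-1) ^ (s * (fst a + sum_list (map fst (take (r - 1) cs)))))
            (frag_extend (\<lambda>c. chain_phi phi (r + (N - r - s) + 1) (a, take (r - 1) cs @ [c] @ drop (r - 1 + s) cs))
                         (chain_mu s (take s (drop (r - 1) cs)))))
     = (\<Sum>s=1..N. frag_cmul ((-1) ^ ((s + 1) * (N - s)))
            (frag_extend (\<lambda>b. chain_nu nuG (N - s + 1) (b, drop (s - 1) cs)) (chain_phi phi s (a, take (s - 1) cs))))"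
  unfolding sum_phi_nu_eq[OF N] sum_phi_mu_eq[OF N] sum_nu_phi_eq[OF N] nd_raw_boundary_phi_cube[OF a cs]
  by (simp add: algebra_simps)

end

lemma keys_chain_phi:
  "b \<in> Poly_Mapping.keys (chain_phi phi m (a, cs)) \<Longrightarrow> fst b = fst a + sum_list (map fst cs) + (m - 1)"
  by (auto simp: chain_phi_eq nd_of split: if_splits)

theorem proposition5p5:
  fixes X :: "'x topology" and x0 :: 'x
    and F :: "'f topology" and nuF :: "'f \<Rightarrow> 'x loop \<Rightarrow> 'f"
    and G :: "'g topology" and nuG :: "'g \<Rightarrow> 'x loop \<Rightarrow> 'g"
    and phi :: "nat \<Rightarrow> (nat \<Rightarrow> real) \<Rightarrow> 'f \<Rightarrow> (nat \<Rightarrow> 'x loop) \<Rightarrow> 'g"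
  assumes "topological_manifold X" and "x0 \<in> topspace X"
    and "right_top_module X x0 F nuF" and "right_top_module X x0 G nuG"
    and "top_ainf_morphism X x0 F nuF G nuG phi"
  shows "ainf_module_morphism fst fst fst (nondeg_cubes F) (nondeg_cubes (Omega_top X x0))
           chain_mu (chain_nu nuF) (chain_nu nuG) (chain_phi phi)"
  unfolding ainf_module_morphism_def
  by (intro conjI allI impI ballI keys_chain_phi chain_phi_ainf_relation[OF assms(5)])
    (auto simp: nondeg_cubes_def)
end
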